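(* Let $a\in(0,1)$. As $n\to\infty$, $\mu\to0$ with $n\mu\to\theta\in[0,\infty)$ and $|\mathcal{S}|\mu\to\eta\in[0,\infty)$, $$\mathbb{E}\Big[\sum_{i\in\mathcal{S}}\delta_{n^{-1}B_i^{n,\mu}}\big((a,1)\big)\Big]\longrightarrow 2\eta(a^{-1}-1).$$
   Context: Basic model. Let $\mathcal{N}=\{A,C,G,T\}$, $\mathcal{S}$ a finite nonempty set of sites. One initial cell with genome $u=(u_i)_{i\in\mathcal{S}}\in\mathcal{N}^{\mathcal{S}}$; each cell lives an independent Exp(1) time and is then replaced by two daughters. At a division of a cell with genome $v$, conditionally on $v$ the daughters' entries $V_i^{(r)}$ ($i\in\mathcal{S}$, $r\in\{1,2\}$) are independent with $\mathbb{P}[V_i^{(r)}=\psi\mid v]=\mu/3$ for $\psi\neq v_i$ and $1-\mu$ for $\psi=v_i$; different divisions mutate independently. $\sigma_n$ = first time there are $n$ alive cells; $B_i^{n,\mu}$ = number of cells alive at $\sigma_n$ whose nucleotide at site $i$ differs from $u_i$. The limit is along arbitrary sequences of $(n,\mu,\mathcal{S})$ with the stated asymptotics. *)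

theory Defs
  imports "HOL-Probability.Probability"
begin

datatype nuc = A | C | G | T

definition mutate :: "real \<Rightarrow> nuc \<Rightarrow> nuc pmf" where
  "mutate mu x = bind_pmf (bernoulli_pmf mu)
     (\<lambda>b. if b then pmf_of_set ({A, C, G, T} - {x}) else return_pmf x)"

text \<open>Genome of a daughter of a cell with genome v: independent mutation at each site of S
  (entries outside S are irrelevant and set to A).\<close>
definition daughter :: "real \<Rightarrow> 'a set \<Rightarrow> ('a \<Rightarrow> nuc) \<Rightarrow> ('a \<Rightarrow> nuc) pmf" where
  "daughter mu S v = Pi_pmf S A (\<lambda>i. mutate mu (v i))"

text \<open>One division in the embedded jump chain of the Yule process: a uniformly chosen alive
  cell is replaced by two independently mutated daughters.\<close>
definition division :: "real \<Rightarrow> 'a set \<Rightarrow> ('a \<Rightarrow> nuc) list \<Rightarrow> ('a \<Rightarrow> nuc) list pmf" where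
  "division mu S cs =
     do { j \<leftarrow> pmf_of_set {..<length cs};
          d1 \<leftarrow> daughter mu S (cs ! j);
          d2 \<leftarrow> daughter mu S (cs ! j);
          return_pmf (take j cs @ [d1, d2] @ drop (Suc j) cs) }"

text \<open>Genomes of the n cells alive at sigma_n (the (n-1)-th division), starting from one cell
  with genome u.\<close>
definition population :: "nat \<Rightarrow> real \<Rightarrow> 'a set \<Rightarrow> ('a \<Rightarrow> nuc) \<Rightarrow> ('a \<Rightarrow> nuc) list pmf" where
  "population n mu S u = ((\<lambda>p. bind_pmf p (division mu S)) ^^ (n - 1)) (return_pmf [u])"

definition Bcount :: "('a \<Rightarrow> nuc) \<Rightarrow> ('a \<Rightarrow> nuc) list \<Rightarrow> 'a \<Rightarrow> nat" where
  "Bcount u cs i = length (filter (\<lambda>c. c i \<noteq> u i) cs)"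

definition expected_sites :: "nat \<Rightarrow> real \<Rightarrow> 'a set \<Rightarrow> ('a \<Rightarrow> nuc) \<Rightarrow> real \<Rightarrow> real" where
  "expected_sites n mu S u a = measure_pmf.expectation (population n mu S u)
     (\<lambda>cs. \<Sum>i\<in>S. indicator {a<..<1} (real (Bcount u cs i) / real n))"

end

theory Submission
  imports Defs "HOL-Real_Asymp.Real_Asymp"
begin

text \<open>Fix a site \<open>i\<close> and let \<open>B\<^sub>m\<close> be the number of cells differing from \<open>u\<^sub>i\<close> when \<open>m\<close>
  cells are alive; it is a Markov chain in \<open>m\<close>. Without mutations it is a Polya urn, for which
  \<open>pochhammer B\<^sub>m r / pochhammer m r\<close> is a martingale, and each division of a non-mutant cell
  creates a new mutant with probability about \<open>2\<mu>\<close>. Summing these contributions over the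
  divisions gives \<open>E[(B\<^sub>n/n)^(j+2)] = 2\<mu>/(j+1) + O(\<mu>(\<mu> + 1/n) (log n)^(j+3))\<close>: after division by
  \<open>\<mu>\<close>, the law of \<open>B\<^sub>n/n\<close> integrates \<open>x\<^sup>2 p(x)\<close>, for every polynomial \<open>p\<close>, like the
  measure \<open>2 dx / x\<^sup>2\<close> on \<open>(0,1]\<close>. Sandwiching the indicator of \<open>(a,1)\<close> between functions of this
  form (Weierstrass) yields \<open>P(B\<^sub>n/n \<in> (a,1)) = 2\<mu>(1/a - 1) + o(\<mu>)\<close>, and summing over the
  \<open>|S| \<approx> \<eta>/\<mu>\<close> sites gives the limit.\<close>

section \<open>Reduction to the mutant count of one site\<close>

text \<open>One division seen from a single site with \<open>b\<close> of the \<open>m\<close> alive cells differing from \<open>u\<^sub>i\<close>: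
  the parent is such a mutant with probability \<open>b/m\<close>; a daughter of a mutant parent still differs
  from \<open>u\<^sub>i\<close> unless it mutates back (probability \<open>\<mu>/3\<close>), a daughter of a non-mutant parent differs
  from \<open>u\<^sub>i\<close> with probability \<open>\<mu>\<close>.\<close>
definition mutant_step :: "real \<Rightarrow> nat \<Rightarrow> nat \<Rightarrow> nat pmf" where
  "mutant_step mu m b =
     do { parent \<leftarrow> bernoulli_pmf (real b / real m);
          d1 \<leftarrow> bernoulli_pmf (if parent then 1 - mu/3 else mu);
          d2 \<leftarrow> bernoulli_pmf (if parent then 1 - mu/3 else mu);
          return_pmf (b - of_bool parent + of_bool d1 + of_bool d2) }"

text \<open>The law of \<open>B\<^sub>i\<close> when \<open>m \<ge> 1\<close> cells are alive; the value at \<open>m = 0\<close> is irrelevant.\<close>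
fun mutant_count :: "real \<Rightarrow> nat \<Rightarrow> nat pmf" where
  "mutant_count mu 0 = return_pmf 0"
| "mutant_count mu (Suc 0) = return_pmf 0"
| "mutant_count mu (Suc (Suc m)) = bind_pmf (mutant_count mu (Suc m)) (mutant_step mu (Suc m))"

lemma expectation_bind_pmf_finite:
  fixes h :: "'b \<Rightarrow> real"
  assumes "finite (set_pmf p)" "\<And>x. x \<in> set_pmf p \<Longrightarrow> finite (set_pmf (f x))"
  shows "measure_pmf.expectation (bind_pmf p f) h =
         measure_pmf.expectation p (\<lambda>x. measure_pmf.expectation (f x) h)"
proof -
  have "measure_pmf.expectation (bind_pmf p f) h =
        (\<Sum>a\<in>set_pmf p. pmf p a *\<^sub>R measure_pmf.expectation (f a) h)"
    using assms by (intro pmf_expectation_bind) auto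
  also have "\<dots> = measure_pmf.expectation p (\<lambda>x. measure_pmf.expectation (f x) h)"
    by (subst integral_measure_pmf[of "set_pmf p"]) (auto simp: assms)
  finally show ?thesis .
qed

lemma finite_set_pmf_mutant_step [simp]: "finite (set_pmf (mutant_step mu m b))"
  unfolding mutant_step_def by simp

lemma expectation_mutant_step:
  fixes f :: "nat \<Rightarrow> real"
  assumes "b \<le> m" "0 < m" "0 \<le> mu" "mu \<le> 1"
  shows "measure_pmf.expectation (mutant_step mu m b) f =
     (real b / real m) * ((1 - mu/3)^2 * f (b + 1) + 2 * (mu/3) * (1 - mu/3) * f b + (mu/3)^2 * f (b - 1))
   + (1 - real b / real m) * ((1 - mu)^2 * f b + 2 * mu * (1 - mu) * f (b + 1) + mu^2 * f (b + 2))"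
proof -
  have "0 \<le> real b / real m" "real b / real m \<le> 1" using assms by auto
  then show ?thesis unfolding mutant_step_def using assms
    by (cases b) (simp_all add: expectation_bind_pmf_finite integral_bernoulli_pmf field_simps power2_eq_square)
qed

lemma set_pmf_mutant_step:
  assumes "b \<le> m" "0 < m"
  shows "set_pmf (mutant_step mu m b) \<subseteq> {..Suc m}"
proof
  fix y assume "y \<in> set_pmf (mutant_step mu m b)"
  then obtain parent d1 d2 where parent: "parent \<in> set_pmf (bernoulli_pmf (real b / real m))"
    and y: "y = b - of_bool parent + of_bool d1 + of_bool d2"
    unfolding mutant_step_def by auto
  have "b < m" if "\<not> parent"
  proof -
    have "real b / real m \<noteq> 1" using parent that by (auto simp: set_pmf_iff)
    then show ?thesis using assms by (auto simp: order.order_iff_strict)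
  qed
  then show "y \<in> {..Suc m}" using y assms by (cases parent) auto
qed

lemma set_pmf_mutant_count: "set_pmf (mutant_count mu m) \<subseteq> {..m}"
proof (induction mu m rule: mutant_count.induct)
  case (3 mu m)
  then show ?case using set_pmf_mutant_step[of _ "Suc m" mu] by fastforce
qed auto

lemma pmf_bool_eqI: "pmf p True = pmf q True \<Longrightarrow> p = (q :: bool pmf)"
  by (rule pmf_eqI) (metis pmf_False_conv_True)

lemma map_pmf_mutate:
  assumes "0 \<le> mu" "mu \<le> 1"
  shows "map_pmf (\<lambda>x. x \<noteq> y) (mutate mu x0) = bernoulli_pmf (if x0 = y then mu else 1 - mu/3)"
proof (rule pmf_bool_eqI)
  have others: "{A, C, G, T} - {x0} \<noteq> {}" by (cases x0) auto
  have "(\<Sum>x\<in>{A, C, G, T} - {x0}. if x \<noteq> y then 1 else 0) / real (card ({A, C, G, T} - {x0}))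
     = (if x0 = y then 1 else 2/3 :: real)"
    by (cases x0; cases y) (simp_all add: insert_Diff_if)
  then have "measure_pmf.expectation (mutate mu x0) (\<lambda>x. if x \<noteq> y then 1 else 0 :: real)
      = mu * (if x0 = y then 1 else 2/3) + (1 - mu) * (if x0 = y then 0 else 1)"
    unfolding mutate_def using assms others
    by (simp add: expectation_bind_pmf_finite integral_pmf_of_set)
  moreover have "pmf q True = measure_pmf.expectation q (\<lambda>b. if b then 1 else 0 :: real)" for q
    by (subst integral_measure_pmf[of UNIV]) (auto simp: UNIV_bool)
  ultimately show "pmf (map_pmf (\<lambda>x. x \<noteq> y) (mutate mu x0)) True
      = pmf (bernoulli_pmf (if x0 = y then mu else 1 - mu/3)) True"
    using assms by simp
qed

lemma map_pmf_daughter: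
  assumes "finite S" "i \<in> S" "0 \<le> mu" "mu \<le> 1"
  shows "map_pmf (\<lambda>d. d i \<noteq> y) (daughter mu S v) = bernoulli_pmf (if v i = y then mu else 1 - mu/3)"
proof -
  have "map_pmf (\<lambda>d. d i \<noteq> y) (daughter mu S v) = map_pmf (\<lambda>x. x \<noteq> y) (map_pmf (\<lambda>d. d i) (daughter mu S v))"
    by (simp add: pmf.map_comp o_def)
  also have "map_pmf (\<lambda>d. d i) (daughter mu S v) = mutate mu (v i)"
    unfolding daughter_def using assms by (simp add: Pi_pmf_component)
  finally show ?thesis using map_pmf_mutate assms by simp
qed

lemma Bcount_replace:
  assumes "j < length cs"
  shows "Bcount u (take j cs @ [d1, d2] @ drop (Suc j) cs) i =
    Bcount u cs i - of_bool ((cs ! j) i \<noteq> u i) + of_bool (d1 i \<noteq> u i) + of_bool (d2 i \<noteq> u i)"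
proof -
  define P where "P = (\<lambda>c::'a \<Rightarrow> nuc. c i \<noteq> u i)"
  have cs: "cs = take j cs @ cs ! j # drop (Suc j) cs" using assms by (simp add: id_take_nth_drop)
  have "Bcount u cs i = length (filter P (take j cs)) + of_bool (P (cs ! j)) + length (filter P (drop (Suc j) cs))"
    unfolding Bcount_def P_def by (subst cs) simp
  then show ?thesis unfolding Bcount_def P_def by simp
qed

lemma map_pmf_of_set_lessThan_bool:
  assumes "0 < m"
  shows "map_pmf P (pmf_of_set {..<m}) = bernoulli_pmf (real (card {j. j < m \<and> P j}) / real m)"
proof (rule pmf_bool_eqI)
  have "card {j. j < m \<and> P j} \<le> m" by (rule order_trans[OF card_mono[of "{..<m}"]]) auto
  have "pmf (map_pmf P (pmf_of_set {..<m})) True = measure_pmf.prob (pmf_of_set {..<m}) {j. P j}"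
    by (simp add: pmf_map vimage_def)
  also have "\<dots> = real (card {j. j < m \<and> P j}) / real m"
    using assms by (subst measure_pmf_of_set) (auto simp: Int_def)
  finally show "pmf (map_pmf P (pmf_of_set {..<m})) True
      = pmf (bernoulli_pmf (real (card {j. j < m \<and> P j}) / real m)) True"
    using \<open>card {j. j < m \<and> P j} \<le> m\<close> assms by simp
qed

lemma map_pmf_Bcount_division:
  assumes "cs \<noteq> []" "finite S" "i \<in> S" "0 \<le> mu" "mu \<le> 1"
  shows "map_pmf (\<lambda>cs'. Bcount u cs' i) (division mu S cs) = mutant_step mu (length cs) (Bcount u cs i)"
proof -
  define m where "m = length cs"
  define B where "B = Bcount u cs i"
  define mutant where "mutant = (\<lambda>j. (cs ! j) i \<noteq> u i)"
  define offspring where "offspring = (\<lambda>parent. do {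
     d1 \<leftarrow> bernoulli_pmf (if parent then 1 - mu/3 else mu);
     d2 \<leftarrow> bernoulli_pmf (if parent then 1 - mu/3 else mu);
     return_pmf (B - of_bool parent + of_bool d1 + of_bool d2) })"
  have "bind_pmf (daughter mu S (cs ! j)) (\<lambda>d1. bind_pmf (daughter mu S (cs ! j)) (\<lambda>d2.
          return_pmf (Bcount u (take j cs @ [d1, d2] @ drop (Suc j) cs) i)))
      = offspring (mutant j)" if "j \<in> set_pmf (pmf_of_set {..<m})" for j
  proof -
    have j: "j < length cs" using that assms(1) by (subst (asm) set_pmf_of_set) (auto simp: m_def)
    have "(if (cs ! j) i = u i then mu else 1 - mu/3) = (if mutant j then 1 - mu/3 else mu)"
      by (simp add: mutant_def)
    then have "bind_pmf (map_pmf (\<lambda>d. d i \<noteq> u i) (daughter mu S (cs ! j))) (\<lambda>x1.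
          bind_pmf (map_pmf (\<lambda>d. d i \<noteq> u i) (daughter mu S (cs ! j))) (\<lambda>x2.
          return_pmf (B - of_bool (mutant j) + of_bool x1 + of_bool x2))) = offspring (mutant j)"
      unfolding map_pmf_daughter[OF assms(2-5)] offspring_def by simp
    moreover have "bind_pmf (daughter mu S (cs ! j)) (\<lambda>d1. bind_pmf (daughter mu S (cs ! j)) (\<lambda>d2.
          return_pmf (Bcount u (take j cs @ [d1, d2] @ drop (Suc j) cs) i)))
      = bind_pmf (map_pmf (\<lambda>d. d i \<noteq> u i) (daughter mu S (cs ! j))) (\<lambda>x1.
          bind_pmf (map_pmf (\<lambda>d. d i \<noteq> u i) (daughter mu S (cs ! j))) (\<lambda>x2.
          return_pmf (B - of_bool (mutant j) + of_bool x1 + of_bool x2)))"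
      unfolding bind_map_pmf Bcount_replace[OF j] B_def mutant_def ..
    ultimately show ?thesis by simp
  qed
  then have "map_pmf (\<lambda>cs'. Bcount u cs' i) (division mu S cs)
      = bind_pmf (pmf_of_set {..<m}) (\<lambda>j. offspring (mutant j))"
    unfolding division_def map_bind_pmf map_return_pmf m_def by (intro bind_pmf_cong) auto
  also have "\<dots> = bind_pmf (map_pmf mutant (pmf_of_set {..<m})) offspring"
    by (simp add: bind_map_pmf)
  also have "map_pmf mutant (pmf_of_set {..<m}) = bernoulli_pmf (real B / real m)"
    using map_pmf_of_set_lessThan_bool[of m mutant] assms(1)
    by (simp add: B_def Bcount_def length_filter_conv_card m_def mutant_def)
  finally show ?thesis unfolding mutant_step_def offspring_def m_def B_def .
qed

lemma population_Suc_Suc: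
  "population (Suc (Suc t)) mu S u = bind_pmf (population (Suc t) mu S u) (division mu S)"
  by (simp add: population_def)

lemma length_division:
  assumes "cs \<noteq> []" "cs' \<in> set_pmf (division mu S cs)"
  shows "length cs' = Suc (length cs)"
proof -
  obtain j d1 d2 where "j \<in> set_pmf (pmf_of_set {..<length cs})"
    and "cs' = take j cs @ [d1, d2] @ drop (Suc j) cs"
    using assms(2) unfolding division_def by auto
  then show ?thesis using assms(1) by (subst (asm) set_pmf_of_set) auto
qed

lemma length_population:
  "cs \<in> set_pmf (population (Suc t) mu S u) \<Longrightarrow> length cs = Suc t"
proof (induction t arbitrary: cs)
  case 0
  then show ?case by (simp add: population_def)
next
  case (Suc t)
  then obtain cs0 where "cs0 \<in> set_pmf (population (Suc t) mu S u)" "cs \<in> set_pmf (division mu S cs0)"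
    unfolding population_Suc_Suc by auto
  then show ?case using Suc.IH length_division[of cs0 cs] by fastforce
qed

lemma map_pmf_Bcount_population:
  assumes "finite S" "i \<in> S" "0 \<le> mu" "mu \<le> 1"
  shows "map_pmf (\<lambda>cs. Bcount u cs i) (population (Suc t) mu S u) = mutant_count mu (Suc t)"
proof (induction t)
  case 0
  then show ?case by (simp add: population_def Bcount_def)
next
  case (Suc t)
  have "map_pmf (\<lambda>cs'. Bcount u cs' i) (division mu S cs) = mutant_step mu (Suc t) (Bcount u cs i)"
    if "cs \<in> set_pmf (population (Suc t) mu S u)" for cs
  proof -
    have "cs \<noteq> []" using length_population[OF that] by auto
    then show ?thesis using map_pmf_Bcount_division[OF _ assms, of cs u] length_population[OF that] by simp
  qed
  then have "map_pmf (\<lambda>cs. Bcount u cs i) (population (Suc (Suc t)) mu S u)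
      = bind_pmf (population (Suc t) mu S u) (\<lambda>cs. mutant_step mu (Suc t) (Bcount u cs i))"
    unfolding population_Suc_Suc map_bind_pmf by (intro bind_pmf_cong) auto
  also have "\<dots> = bind_pmf (map_pmf (\<lambda>cs. Bcount u cs i) (population (Suc t) mu S u)) (mutant_step mu (Suc t))"
    by (simp add: bind_map_pmf)
  also have "\<dots> = mutant_count mu (Suc (Suc t))"
    unfolding Suc by simp
  finally show ?case .
qed

lemma expected_sites_eq:
  assumes "finite S" "0 \<le> mu" "mu \<le> 1" "0 < n"
  shows "expected_sites n mu S u a =
    real (card S) * measure_pmf.expectation (mutant_count mu n) (\<lambda>b. indicator {a<..<1} (real b / real n))"
proof -
  obtain t where n: "n = Suc t" using assms(4) gr0_implies_Suc by blast
  have "expected_sites n mu S u a = (\<Sum>i\<in>S. measure_pmf.expectation (population n mu S u)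
          (\<lambda>cs. indicator {a<..<1} (real (Bcount u cs i) / real n) :: real))"
    unfolding expected_sites_def
    by (intro Bochner_Integration.integral_sum measure_pmf.integrable_const_bound[where B=1])
       (auto simp: indicator_def)
  also have "\<dots> = (\<Sum>i\<in>S. measure_pmf.expectation (mutant_count mu n) (\<lambda>b. indicator {a<..<1} (real b / real n)))"
  proof (intro sum.cong refl)
    fix i assume "i \<in> S"
    then have "map_pmf (\<lambda>cs. Bcount u cs i) (population n mu S u) = mutant_count mu n"
      unfolding n by (rule map_pmf_Bcount_population[OF assms(1) _ assms(2,3)])
    then show "measure_pmf.expectation (population n mu S u) (\<lambda>cs. indicator {a<..<1} (real (Bcount u cs i) / real n))
      = measure_pmf.expectation (mutant_count mu n) (\<lambda>b. indicator {a<..<1} (real b / real n) :: real)"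
      using integral_map_pmf[of "\<lambda>cs. Bcount u cs i" "population n mu S u"
          "\<lambda>b. indicator {a<..<1} (real b / real n) :: real"] by simp
  qed
  finally show ?thesis by simp
qed

lemma finite_set_pmf_mutant_count [simp]: "finite (set_pmf (mutant_count mu m))"
  using set_pmf_mutant_count finite_subset by blast

lemma integrable_mutant_count [simp]:
  "integrable (measure_pmf (mutant_count mu m)) (f :: nat \<Rightarrow> real)"
  by (simp add: integrable_measure_pmf_finite)

lemma expectation_mutant_count_eq_sum:
  fixes f :: "nat \<Rightarrow> real"
  shows "measure_pmf.expectation (mutant_count mu m) f = (\<Sum>b\<le>m. pmf (mutant_count mu m) b * f b)"
  using set_pmf_mutant_count by (subst integral_measure_pmf[of "{..m}"]) auto

lemma expectation_mutant_count_mono: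
  fixes f g :: "nat \<Rightarrow> real"
  shows "(\<And>b. b \<le> m \<Longrightarrow> f b \<le> g b) \<Longrightarrow>
    measure_pmf.expectation (mutant_count mu m) f \<le> measure_pmf.expectation (mutant_count mu m) g"
  unfolding expectation_mutant_count_eq_sum by (intro sum_mono mult_left_mono) auto

lemma expectation_mutant_count_Suc:
  fixes f :: "nat \<Rightarrow> real"
  assumes "0 < m"
  shows "measure_pmf.expectation (mutant_count mu (Suc m)) f =
    measure_pmf.expectation (mutant_count mu m) (\<lambda>b. measure_pmf.expectation (mutant_step mu m b) f)"
proof -
  obtain m' where "m = Suc m'" using assms gr0_implies_Suc by blast
  then show ?thesis by (simp add: expectation_bind_pmf_finite)
qed

section \<open>Rising factorials\<close>

lemma pochhammer_Suc_shift:
  "pochhammer (x + 1) (Suc k) = pochhammer (x :: real) (Suc k) + real (Suc k) * pochhammer (x + 1) k"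
proof -
  have "pochhammer (x + 1) (Suc k) = (x + 1 + real k) * pochhammer (x + 1) k"
    by (simp add: pochhammer_rec')
  moreover have "pochhammer x (Suc k) = x * pochhammer (x + 1) k"
    by (simp add: pochhammer_rec)
  ultimately show ?thesis by (simp add: algebra_simps)
qed

lemma pochhammer_succ_ratio: "pochhammer (x + 1) r * x = pochhammer x r * (x + real r)"
  by (metis mult.commute pochhammer_rec pochhammer_rec')

lemma pochhammer_nonneg': "0 \<le> (x :: real) \<Longrightarrow> 0 \<le> pochhammer x k"
  by (induction k) (auto simp: pochhammer_rec')

lemma pochhammer_mono: "0 \<le> (x :: real) \<Longrightarrow> x \<le> y \<Longrightarrow> pochhammer x k \<le> pochhammer y k"
proof (induction k)
  case (Suc k)
  have "pochhammer x (Suc k) = (x + k) * pochhammer x k" by (simp add: pochhammer_rec')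
  also have "\<dots> \<le> (y + k) * pochhammer y k"
    using Suc pochhammer_nonneg'[of x k] by (intro mult_mono) auto
  also have "\<dots> = pochhammer y (Suc k)" by (simp add: pochhammer_rec')
  finally show ?case .
qed simp

lemma fact_le_pochhammer: "1 \<le> (x :: real) \<Longrightarrow> fact k \<le> pochhammer x k"
  using pochhammer_mono[of 1 x k] by (simp add: pochhammer_fact)

lemma pochhammer_two: "pochhammer (2 :: real) k = fact (Suc k)"
  using pochhammer_rec[of "1 :: real" k] by (simp add: pochhammer_fact one_add_one)

lemma pochhammer_shift_le: "1 \<le> (x :: real) \<Longrightarrow> pochhammer (x + 1) k \<le> real (Suc k) * pochhammer x k"
proof -
  assume x: "1 \<le> x"
  have "x + real k \<le> real (Suc k) * x" using x mult_left_mono[of 1 x "real k"] by (simp add: algebra_simps)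
  then have "pochhammer x k * (x + k) \<le> pochhammer x k * (real (Suc k) * x)"
    using x pochhammer_nonneg'[of x k] by (intro mult_left_mono) auto
  moreover note pochhammer_succ_ratio[of x k]
  ultimately have "pochhammer (x + 1) k * x \<le> (real (Suc k) * pochhammer x k) * x"
    by (simp add: algebra_simps)
  then show ?thesis using x by simp
qed

lemma pochhammer_le_power: "1 \<le> (x :: real) \<Longrightarrow> pochhammer x k \<le> (x * k) ^ k"
proof -
  assume x: "1 \<le> x"
  have "x + real i \<le> x * real k" if "i < k" for i
  proof -
    have "x + real i \<le> x * (real i + 1)" using x mult_right_mono[of 1 x "real i"] by (simp add: algebra_simps)
    also have "\<dots> \<le> x * real k" using that x by (intro mult_left_mono) auto
    finally show ?thesis .
  qed
  then have "(\<Prod>i<k. x + real i) \<le> (\<Prod>i<k. x * real k)"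
    using x by (intro prod_mono) auto
  then show ?thesis by (simp add: pochhammer_prod atLeast0LessThan)
qed

lemma pochhammer_minus_power:
  assumes "0 \<le> (x :: real)"
  shows "0 \<le> pochhammer x r - x ^ r \<and> pochhammer x r - x ^ r \<le> real r ^ 2 * pochhammer x (r - 1)"
proof (induction r)
  case (Suc r)
  have nonneg: "0 \<le> pochhammer x r" using pochhammer_nonneg' assms by simp
  have "x * (real r ^ 2 * pochhammer x (r - 1)) \<le> real r ^ 2 * pochhammer x r"
  proof (cases r)
    case (Suc r')
    then have "x * pochhammer x (r - 1) \<le> pochhammer x r"
      using pochhammer_nonneg'[of x r'] assms by (simp add: pochhammer_rec' mult_right_mono)
    then show ?thesis by (metis mult.left_commute mult_left_mono of_nat_0_le_iff zero_le_power2)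
  qed simp
  moreover have "x * (pochhammer x r - x ^ r) \<le> x * (real r ^ 2 * pochhammer x (r - 1))"
    using Suc assms by (intro mult_left_mono) auto
  moreover have diff: "pochhammer x (Suc r) - x ^ Suc r = x * (pochhammer x r - x ^ r) + r * pochhammer x r"
    by (simp add: pochhammer_rec' algebra_simps)
  ultimately have "pochhammer x (Suc r) - x ^ Suc r \<le> (real r ^ 2 + r) * pochhammer x r"
    by (simp add: algebra_simps)
  also have "\<dots> \<le> real (Suc r) ^ 2 * pochhammer x r"
    using nonneg by (intro mult_right_mono) (auto simp: power2_eq_square algebra_simps)
  finally show ?case using diff Suc nonneg assms by simp
qed simp

lemma pochhammer_le_power_div: "1 \<le> (x :: real) \<Longrightarrow> pochhammer x k \<le> x ^ Suc k * (real k ^ k / x)"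
  using pochhammer_le_power[of x k] by (simp add: power_mult_distrib)

lemma pochhammer_le_power_mult:
  assumes "1 \<le> (x :: real)"
  shows "pochhammer x (Suc k) \<le> x ^ Suc k * (1 + real (Suc k)^2 * real k ^ k / x)"
proof -
  have "pochhammer x (Suc k) \<le> x ^ Suc k + real (Suc k)^2 * pochhammer x k"
    using pochhammer_minus_power[of x "Suc k"] assms by simp
  also have "\<dots> \<le> x ^ Suc k + real (Suc k)^2 * (x ^ Suc k * (real k ^ k / x))"
    using pochhammer_le_power_div[OF assms, of k] by (intro add_left_mono mult_left_mono) auto
  also have "\<dots> = x ^ Suc k * (1 + real (Suc k)^2 * real k ^ k / x)"
    by (simp add: distrib_left)
  finally show ?thesis .
qed

lemma fact_div_pochhammer_le: "fact (Suc k) / pochhammer (real m + 1) (Suc k) \<le> real (Suc k) / (real m + 1)"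
proof -
  have "fact k \<le> pochhammer (real m + 1 + 1) k" by (rule fact_le_pochhammer) simp
  then have "(real m + 1) * fact k \<le> pochhammer (real m + 1) (Suc k)"
    by (simp add: pochhammer_rec)
  then have "real (Suc k) * ((real m + 1) * fact k) \<le> real (Suc k) * pochhammer (real m + 1) (Suc k)"
    by (intro mult_left_mono) auto
  then have "fact (Suc k) * (real m + 1) \<le> real (Suc k) * pochhammer (real m + 1) (Suc k)"
    by (simp add: algebra_simps)
  moreover have "0 < pochhammer (real m + 1) (Suc k)" by (intro pochhammer_pos) simp
  ultimately show ?thesis by (simp add: field_simps)
qed

lemma fact_mult_div_pochhammer_le:
  "fact (Suc (Suc j)) * real m / pochhammer (real m + 1) (Suc (Suc j)) \<le> real (Suc (Suc j))^2 / (real m + 1)"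
proof -
  define x where "x = real m + 1"
  have x: "1 \<le> x" by (simp add: x_def)
  have "fact j \<le> pochhammer (x + 1 + 1) j" using x by (intro fact_le_pochhammer) auto
  then have P: "x * (x + 1) * fact j \<le> pochhammer x (Suc (Suc j))"
    using x by (simp add: pochhammer_rec mult_left_mono)
  have "fact (Suc (Suc j)) * real m * x = (real j + 2) * (real j + 1) * real m * (x * fact j)"
    by (simp add: algebra_simps)
  also have "\<dots> \<le> (real j + 2) * (real j + 2) * (x + 1) * (x * fact j)"
    using x by (intro mult_right_mono mult_mono) (auto simp: x_def)
  also have "\<dots> = real (Suc (Suc j))^2 * (x * (x + 1) * fact j)"
    by (simp add: algebra_simps power2_eq_square)
  also have "\<dots> \<le> real (Suc (Suc j))^2 * pochhammer x (Suc (Suc j))"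
    using P by (intro mult_left_mono) auto
  finally have "fact (Suc (Suc j)) * real m * x \<le> real (Suc (Suc j))^2 * pochhammer x (Suc (Suc j))" .
  moreover have "0 < pochhammer x (Suc (Suc j))" using x by (intro pochhammer_pos) simp
  ultimately show ?thesis using x by (simp add: x_def divide_simps)
qed

lemma recip_pochhammer_diff:
  assumes "0 < x"
  shows "1 / pochhammer x (Suc j) - 1 / pochhammer (x + 1) (Suc j) = real (Suc j) / pochhammer (x :: real) (Suc (Suc j))"
proof -
  define P where "P = pochhammer x (Suc j)"
  define Q where "Q = pochhammer (x + 1) (Suc j)"
  have pos: "0 < P" "0 < Q" using assms by (simp_all add: P_def Q_def pochhammer_pos)
  have "pochhammer x (Suc (Suc j)) = P * (x + real (Suc j))"
    by (simp add: P_def pochhammer_rec')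
  moreover have shifted: "pochhammer x (Suc (Suc j)) = x * Q"
    by (simp add: Q_def pochhammer_rec)
  ultimately have key: "x * Q - x * P = P * real (Suc j)" by (simp add: algebra_simps)
  have "1 / P - 1 / Q = (x * Q - x * P) / (x * P * Q)" using pos assms by (simp add: field_simps)
  also have "\<dots> = real (Suc j) / (x * Q)" unfolding key using pos by simp
  finally show ?thesis unfolding shifted P_def Q_def .
qed

lemma sum_recip_pochhammer:
  assumes "1 \<le> n"
  shows "(\<Sum>m = 1..<n. 1 / pochhammer (real m + 1) (Suc (Suc j)))
    = (1 / fact (Suc (Suc j)) - 1 / pochhammer (real n + 1) (Suc j)) / real (Suc j)"
proof -
  define f where "f = (\<lambda>m. - 1 / pochhammer (real m + 1) (Suc j) / real (Suc j))"
  have "f (Suc m) - f m = (1 / pochhammer (real m + 1) (Suc j) - 1 / pochhammer (real m + 1 + 1) (Suc j))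
      / real (Suc j)" for m
    unfolding f_def by (simp add: diff_divide_distrib add_ac)
  then have "1 / pochhammer (real m + 1) (Suc (Suc j)) = f (Suc m) - f m" for m
    using recip_pochhammer_diff[of "real m + 1" j] by simp
  then have "(\<Sum>m = 1..<n. 1 / pochhammer (real m + 1) (Suc (Suc j))) = f n - f 1"
    using sum_Suc_diff'[OF assms, of f] by simp
  then show ?thesis by (simp add: f_def diff_divide_distrib one_add_one pochhammer_two del: fact_Suc)
qed

lemma fact_mult_sum_recip_pochhammer_le:
  "fact (Suc (Suc j)) * (\<Sum>m = 1..<n. 1 / pochhammer (real m + 1) (Suc (Suc j))) \<le> 1 / real (Suc j)"
proof (cases "1 \<le> n")
  case True
  define F :: real where "F = fact (Suc (Suc j))"
  define P where "P = pochhammer (real n + 1) (Suc j)"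
  have "0 < F" "0 < P" by (simp_all add: F_def P_def pochhammer_pos)
  then have "F * ((1 / F - 1 / P) / real (Suc j)) = 1 / real (Suc j) - F / P / real (Suc j)"
    by (simp add: right_diff_distrib diff_divide_distrib)
  also have "\<dots> \<le> 1 / real (Suc j)" using \<open>0 < F\<close> \<open>0 < P\<close> by simp
  finally have "F * ((1 / F - 1 / P) / real (Suc j)) \<le> 1 / real (Suc j)" .
  then show ?thesis unfolding sum_recip_pochhammer[OF True] F_def P_def .
qed simp

lemma fact_mult_sum_recip_pochhammer_ge:
  assumes "1 \<le> n"
  shows "1 / real (Suc j) - fact (Suc (Suc j)) / (real n + 1)
    \<le> fact (Suc (Suc j)) * (\<Sum>m = 1..<n. 1 / pochhammer (real m + 1) (Suc (Suc j)))"
proof -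
  define F :: real where "F = fact (Suc (Suc j))"
  define P where "P = pochhammer (real n + 1) (Suc j)"
  have "fact j \<le> pochhammer (real n + 2) j" by (rule fact_le_pochhammer) simp
  then have "1 \<le> pochhammer (real n + 2) j" using fact_ge_1[of j, where 'a=real] by linarith
  then have P: "real n + 1 \<le> P"
    using mult_left_mono[of 1 "pochhammer (real n + 2) j" "real n + 1"]
    by (simp add: P_def pochhammer_rec add.assoc one_add_one)
  have F: "0 < F" by (simp add: F_def)
  have "F / P / real (Suc j) \<le> F / (real n + 1) / 1"
    using P F by (intro frac_le divide_left_mono) auto
  moreover have "F * ((1 / F - 1 / P) / real (Suc j)) = 1 / real (Suc j) - F / P / real (Suc j)"
    using F by (simp add: right_diff_distrib diff_divide_distrib)
  ultimately have "1 / real (Suc j) - F / (real n + 1) \<le> F * ((1 / F - 1 / P) / real (Suc j))"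
    by simp
  then show ?thesis unfolding sum_recip_pochhammer[OF assms] F_def P_def .
qed

section \<open>Rising factorial moments of the mutant count\<close>

text \<open>The first term is the Polya urn; the second is lost when a daughter of a mutant parent mutates
  back, the third is gained when a daughter of a non-mutant parent mutates.\<close>
lemma expectation_mutant_step_pochhammer:
  assumes "b \<le> m" "0 < m" "0 \<le> mu" "mu \<le> 1"
  shows "measure_pmf.expectation (mutant_step mu m b) (\<lambda>c. pochhammer (real c) (Suc k)) =
    pochhammer (real b) (Suc k) * (real m + real (Suc k)) / real m
    - (real b / real m) * ((mu/3) * (2 - mu/3) * real (Suc k) * pochhammer (real b + 1) k
                          + (mu/3)^2 * real (Suc k) * pochhammer (real b) k)
    + (1 - real b / real m) * (mu * (2 - mu) * real (Suc k) * pochhammer (real b + 1) k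
                          + mu^2 * real (Suc k) * pochhammer (real b + 2) k)"
proof -
  define y where "y = real b"
  define r where "r = real (Suc k)"
  define P :: "real \<Rightarrow> real" where "P = (\<lambda>x. pochhammer x (Suc k))"
  have shift1: "P (y + 1) = P y + r * pochhammer (y + 1) k"
    unfolding P_def r_def by (rule pochhammer_Suc_shift)
  have shift2: "P (y + 2) = P (y + 1) + r * pochhammer (y + 2) k"
    using pochhammer_Suc_shift[of "y + 1" k] by (simp add: P_def r_def add.assoc)
  have mutant_parent: "(y / real m) * ((1 - mu/3)^2 * P (real (b + 1)) + 2 * (mu/3) * (1 - mu/3) * P y
         + (mu/3)^2 * P (real (b - 1)))
     = (y / real m) * (P y + r * pochhammer (y + 1) k
        - ((mu/3) * (2 - mu/3) * r * pochhammer (y + 1) k + (mu/3)^2 * r * pochhammer y k))"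
  proof (cases b)
    case (Suc c)
    have "P y = P (y - 1) + r * pochhammer y k"
      using pochhammer_Suc_shift[of "y - 1" k] by (simp add: P_def r_def)
    moreover have "real (b - 1) = y - 1" "real (b + 1) = y + 1" using Suc by (simp_all add: y_def)
    ultimately show ?thesis using shift1 assms(2) by (simp add: field_simps power2_eq_square)
  qed (simp add: y_def)
  have normal_parent: "(1 - mu)^2 * P y + 2 * mu * (1 - mu) * P (real (b + 1)) + mu^2 * P (real (b + 2))
      = P y + (mu * (2 - mu) * r * pochhammer (y + 1) k + mu^2 * r * pochhammer (y + 2) k)"
    using shift1 shift2 by (simp add: y_def algebra_simps power2_eq_square)
  have rec: "y * pochhammer (y + 1) k = P y" by (simp add: P_def pochhammer_rec)
  have "measure_pmf.expectation (mutant_step mu m b) (\<lambda>c. pochhammer (real c) (Suc k))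
      = (y / real m) * ((1 - mu/3)^2 * P (real (b + 1)) + 2 * (mu/3) * (1 - mu/3) * P y
         + (mu/3)^2 * P (real (b - 1)))
      + (1 - y / real m) * ((1 - mu)^2 * P y + 2 * mu * (1 - mu) * P (real (b + 1)) + mu^2 * P (real (b + 2)))"
    unfolding expectation_mutant_step[OF assms] by (simp add: P_def y_def)
  also have "\<dots> = (y / real m) * (P y + r * pochhammer (y + 1) k
        - ((mu/3) * (2 - mu/3) * r * pochhammer (y + 1) k + (mu/3)^2 * r * pochhammer y k))
      + (1 - y / real m) * (P y + (mu * (2 - mu) * r * pochhammer (y + 1) k + mu^2 * r * pochhammer (y + 2) k))"
    unfolding mutant_parent normal_parent ..
  also have "\<dots> = P y * (real m + r) / real m
        - (y / real m) * ((mu/3) * (2 - mu/3) * r * pochhammer (y + 1) k + (mu/3)^2 * r * pochhammer y k)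
        + (1 - y / real m) * (mu * (2 - mu) * r * pochhammer (y + 1) k + mu^2 * r * pochhammer (y + 2) k)"
    using rec assms(2) by (simp add: field_simps)
  finally show ?thesis by (simp add: P_def y_def r_def)
qed

lemma mutation_gain_no_mutants:
  "mu * (2 - mu) * real (Suc k) * pochhammer 1 k + mu^2 * real (Suc k) * pochhammer 2 k
    = fact (Suc k) * (2 * mu + real k * mu^2 :: real)"
proof -
  have "pochhammer 1 k = (fact k :: real)" "pochhammer 2 k = (fact (Suc k) :: real)"
    by (simp_all add: pochhammer_fact pochhammer_two)
  then show ?thesis by (simp add: algebra_simps power2_eq_square)
qed

lemma mutation_gain_le:
  assumes "0 \<le> mu" "mu \<le> 1"
  shows "mu * (2 - mu) * real (Suc k) * pochhammer (real b + 1) k + mu^2 * real (Suc k) * pochhammer (real b + 2) k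
    \<le> fact (Suc k) * (2 * mu + real (Suc k) * mu^2)
       + 2 * real (Suc k)^2 * (real (Suc k) + 1) * mu * pochhammer (real b) k"
proof (cases b)
  case 0
  have "fact (Suc k) * (2 * mu + real k * mu^2) \<le> fact (Suc k) * (2 * mu + real (Suc k) * mu^2)"
    by (intro mult_left_mono) (auto intro: mult_right_mono)
  moreover have "0 \<le> 2 * real (Suc k)^2 * (real (Suc k) + 1) * mu * pochhammer (real b) k"
    using assms pochhammer_nonneg'[of "real b" k] by simp
  moreover have "mu * (2 - mu) * real (Suc k) * pochhammer (real b + 1) k
      + mu^2 * real (Suc k) * pochhammer (real b + 2) k = fact (Suc k) * (2 * mu + real k * mu^2)"
    using 0 mutation_gain_no_mutants[of mu k] by simp
  ultimately show ?thesis by linarith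
next
  case (Suc c)
  define r where "r = real (Suc k)"
  define Q where "Q = pochhammer (real b) k"
  have r: "1 \<le> r" by (simp add: r_def)
  have Q: "0 \<le> Q" by (simp add: Q_def pochhammer_nonneg')
  have Q1: "pochhammer (real b + 1) k \<le> r * Q"
    using pochhammer_shift_le[of "real b" k] Suc by (simp add: r_def Q_def)
  have "pochhammer (real b + 2) k \<le> r * pochhammer (real b + 1) k"
    using pochhammer_shift_le[of "real b + 1" k] Suc by (simp add: r_def add.assoc)
  also have "\<dots> \<le> r * (r * Q)" using Q1 r by (intro mult_left_mono) auto
  finally have Q2: "pochhammer (real b + 2) k \<le> r * (r * Q)" .
  have gain: "mu * (2 - mu) * r \<le> 2 * mu * r" "mu^2 * r \<le> mu * r"
    using assms r mult_right_mono[of "mu * mu" mu r] mult_left_le[of mu mu]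
    by (simp_all add: algebra_simps power2_eq_square)
  have "mu * (2 - mu) * r * pochhammer (real b + 1) k \<le> (2 * mu * r) * (r * Q)"
    by (rule mult_mono[OF gain(1) Q1]) (use assms r in \<open>auto simp: pochhammer_nonneg'\<close>)
  moreover have "mu^2 * r * pochhammer (real b + 2) k \<le> (mu * r) * (r * (r * Q))"
    by (rule mult_mono[OF gain(2) Q2]) (use assms r in \<open>auto simp: pochhammer_nonneg'\<close>)
  ultimately have "mu * (2 - mu) * r * pochhammer (real b + 1) k + mu^2 * r * pochhammer (real b + 2) k
      \<le> 2 * mu * r * (r * Q) + mu * r * (r * (r * Q))"
    by linarith
  also have "\<dots> = 2 * r^2 * (r + 1) * mu * Q - r^3 * mu * Q"
    by (simp add: algebra_simps power2_eq_square power3_eq_cube)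
  also have "\<dots> \<le> 2 * r^2 * (r + 1) * mu * Q" using assms r Q by simp
  also have "\<dots> \<le> fact (Suc k) * (2 * mu + r * mu^2) + 2 * r^2 * (r + 1) * mu * Q"
    using assms r by (simp del: fact_Suc)
  finally show ?thesis by (simp add: r_def Q_def)
qed

lemma expectation_mutant_step_pochhammer_le:
  assumes "b \<le> m" "0 < m" "0 \<le> mu" "mu \<le> 1"
  shows "measure_pmf.expectation (mutant_step mu m b) (\<lambda>c. pochhammer (real c) (Suc k)) \<le>
     pochhammer (real b) (Suc k) * (real m + real (Suc k)) / real m
     + fact (Suc k) * (2 * mu + real (Suc k) * mu^2)
     + 2 * real (Suc k)^2 * (real (Suc k) + 1) * mu * pochhammer (real b) k"
proof -
  have "0 \<le> (real b / real m) * ((mu/3) * (2 - mu/3) * real (Suc k) * pochhammer (real b + 1) k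
                          + (mu/3)^2 * real (Suc k) * pochhammer (real b) k)"
    using assms by (simp add: pochhammer_nonneg')
  moreover have "(1 - real b / real m) * (mu * (2 - mu) * real (Suc k) * pochhammer (real b + 1) k
                          + mu^2 * real (Suc k) * pochhammer (real b + 2) k)
      \<le> mu * (2 - mu) * real (Suc k) * pochhammer (real b + 1) k + mu^2 * real (Suc k) * pochhammer (real b + 2) k"
    using assms by (intro mult_left_le_one_le add_nonneg_nonneg) (auto simp: pochhammer_nonneg')
  ultimately show ?thesis
    using expectation_mutant_step_pochhammer[OF assms, of k] mutation_gain_le[OF assms(3,4), of k b]
    by linarith
qed

lemma expectation_mutant_step_pochhammer_ge:
  assumes "b \<le> m" "0 < m" "0 \<le> mu" "mu \<le> 1"
  shows "measure_pmf.expectation (mutant_step mu m b) (\<lambda>c. pochhammer (real c) (Suc k)) \<ge>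
     pochhammer (real b) (Suc k) * (real m + real (Suc k)) / real m
     + 2 * mu * fact (Suc k) * (1 - real b)
     - mu * real (Suc k) * pochhammer (real b) (Suc k) / real m"
proof -
  define r where "r = real (Suc k)"
  define t where "t = real b / real m"
  have "(mu/3) * (2 - mu/3) * r * pochhammer (real b + 1) k + (mu/3)^2 * r * pochhammer (real b) k
      \<le> (2 * mu / 3) * r * pochhammer (real b + 1) k + (mu/3) * r * pochhammer (real b + 1) k"
    using assms pochhammer_mono[of "real b" "real b + 1" k] mult_left_le[of mu mu]
    by (intro add_mono mult_right_mono mult_mono) (auto simp: r_def power2_eq_square field_simps pochhammer_nonneg')
  then have "t * ((mu/3) * (2 - mu/3) * r * pochhammer (real b + 1) k + (mu/3)^2 * r * pochhammer (real b) k)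
      \<le> t * (mu * r * pochhammer (real b + 1) k)"
    using assms by (intro mult_left_mono) (auto simp: t_def)
  also have "\<dots> = mu * r * pochhammer (real b) (Suc k) / real m"
    by (simp add: t_def pochhammer_rec)
  finally have mutant_loss: "t * ((mu/3) * (2 - mu/3) * r * pochhammer (real b + 1) k
      + (mu/3)^2 * r * pochhammer (real b) k) \<le> mu * r * pochhammer (real b) (Suc k) / real m" .
  \<comment> \<open>\<open>1 - b\<close> minorizes the indicator of \<open>b = 0\<close> and is linear, so it survives taking expectations.\<close>
  have mutation_gain: "2 * mu * fact (Suc k) * (1 - real b)
      \<le> (1 - t) * (mu * (2 - mu) * r * pochhammer (real b + 1) k + mu^2 * r * pochhammer (real b + 2) k)"
  proof (cases b)
    case 0
    have "2 * mu * fact (Suc k) \<le> fact (Suc k) * (2 * mu + real k * mu^2)"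
      by (simp add: algebra_simps)
    then show ?thesis using 0 mutation_gain_no_mutants[of mu k] by (simp add: t_def r_def)
  next
    case (Suc c)
    then have "2 * mu * fact (Suc k) * (1 - real b) \<le> 0" using assms by (intro mult_nonneg_nonpos) auto
    also have "0 \<le> (1 - t) * (mu * (2 - mu) * r * pochhammer (real b + 1) k + mu^2 * r * pochhammer (real b + 2) k)"
      using assms by (intro mult_nonneg_nonneg add_nonneg_nonneg) (auto simp: t_def r_def pochhammer_nonneg')
    finally show ?thesis .
  qed
  show ?thesis using expectation_mutant_step_pochhammer[OF assms, of k] mutant_loss mutation_gain
    unfolding t_def r_def by linarith
qed

definition rising_moment :: "real \<Rightarrow> nat \<Rightarrow> nat \<Rightarrow> real" where
  "rising_moment mu r m = measure_pmf.expectation (mutant_count mu m) (\<lambda>b. pochhammer (real b) r)"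

text \<open>For \<open>\<mu> = 0\<close> the process is a Polya urn and \<open>pochhammer B r / pochhammer m r\<close> is a
  martingale, so the scaled moment only changes through mutations.\<close>
definition scaled_moment :: "real \<Rightarrow> nat \<Rightarrow> nat \<Rightarrow> real" where
  "scaled_moment mu r m = rising_moment mu r m / pochhammer (real m) r"

lemma rising_moment_nonneg: "0 \<le> rising_moment mu r m"
  unfolding rising_moment_def by (intro integral_nonneg_AE) (simp add: pochhammer_nonneg')

lemma scaled_moment_nonneg: "0 \<le> scaled_moment mu r m"
  unfolding scaled_moment_def by (simp add: rising_moment_nonneg pochhammer_nonneg')

lemma scaled_moment_0 [simp]: "scaled_moment mu 0 m = 1"
  by (simp add: scaled_moment_def rising_moment_def)

lemma scaled_moment_one_cell [simp]: "scaled_moment mu (Suc k) (Suc 0) = 0"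
  by (simp add: scaled_moment_def rising_moment_def pochhammer_rec)

lemma rising_moment_eq_scaled:
  "0 < m \<Longrightarrow> rising_moment mu r m = scaled_moment mu r m * pochhammer (real m) r"
  by (simp add: scaled_moment_def pochhammer_pos[THEN less_imp_neq, symmetric])

lemma rising_moment_Suc_le:
  assumes "0 \<le> mu" "mu \<le> 1" "0 < m"
  shows "rising_moment mu (Suc k) (Suc m) \<le> (real m + real (Suc k)) / real m * rising_moment mu (Suc k) m
     + fact (Suc k) * (2 * mu + real (Suc k) * mu^2)
     + 2 * real (Suc k)^2 * (real (Suc k) + 1) * mu * rising_moment mu k m"
proof -
  have "rising_moment mu (Suc k) (Suc m) \<le> measure_pmf.expectation (mutant_count mu m)
     (\<lambda>b. (real m + real (Suc k)) / real m * pochhammer (real b) (Suc k)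
        + fact (Suc k) * (2 * mu + real (Suc k) * mu^2)
        + 2 * real (Suc k)^2 * (real (Suc k) + 1) * mu * pochhammer (real b) k)"
    unfolding rising_moment_def expectation_mutant_count_Suc[OF assms(3)] using assms
    by (intro expectation_mutant_count_mono)
       (auto dest: expectation_mutant_step_pochhammer_le[of _ m mu k] simp: field_simps)
  then show ?thesis by (simp add: rising_moment_def)
qed

lemma rising_moment_Suc_ge:
  assumes "0 \<le> mu" "mu \<le> 1" "0 < m"
  shows "rising_moment mu (Suc k) (Suc m) \<ge> (real m + real (Suc k)) / real m * rising_moment mu (Suc k) m
     + 2 * mu * fact (Suc k) * (1 - rising_moment mu 1 m)
     - mu * real (Suc k) / real m * rising_moment mu (Suc k) m"
proof -
  have "rising_moment mu (Suc k) (Suc m) \<ge> measure_pmf.expectation (mutant_count mu m)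
     (\<lambda>b. (real m + real (Suc k)) / real m * pochhammer (real b) (Suc k)
        + 2 * mu * fact (Suc k) - 2 * mu * fact (Suc k) * real b
        - mu * real (Suc k) / real m * pochhammer (real b) (Suc k))"
    unfolding rising_moment_def expectation_mutant_count_Suc[OF assms(3)] using assms
    by (intro expectation_mutant_count_mono)
       (auto dest: expectation_mutant_step_pochhammer_ge[of _ m mu k] simp: field_simps)
  then show ?thesis by (simp add: rising_moment_def algebra_simps)
qed

lemma rising_moment_scaled_step:
  assumes "0 < m"
  shows "(real m + real r) / real m * rising_moment mu r m / pochhammer (real m + 1) r = scaled_moment mu r m"
proof -
  have "(real m + real r) / real m * rising_moment mu r m / pochhammer (real m + 1) r
      = (real m + real r) * rising_moment mu r m / (pochhammer (real m + 1) r * real m)"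
    by simp
  also have "\<dots> = (real m + real r) * rising_moment mu r m / ((real m + real r) * pochhammer (real m) r)"
    unfolding pochhammer_succ_ratio by (simp add: mult.commute)
  also have "\<dots> = scaled_moment mu r m"
    using assms by (simp add: scaled_moment_def)
  finally show ?thesis .
qed

lemma rising_moment_div_pochhammer_Suc:
  assumes "0 < m"
  shows "rising_moment mu k m / pochhammer (real m + 1) (Suc k) \<le> scaled_moment mu k m / (real m + 1)"
proof -
  have "pochhammer (real m) k \<le> pochhammer (real m + 1 + 1) k" by (rule pochhammer_mono) auto
  then have "(real m + 1) * pochhammer (real m) k \<le> pochhammer (real m + 1) (Suc k)"
    by (simp add: pochhammer_rec)
  then have "scaled_moment mu k m * ((real m + 1) * pochhammer (real m) k)
      \<le> scaled_moment mu k m * pochhammer (real m + 1) (Suc k)"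
    by (intro mult_left_mono scaled_moment_nonneg)
  moreover have "0 < pochhammer (real m + 1) (Suc k)" by (intro pochhammer_pos) simp
  ultimately show ?thesis using rising_moment_eq_scaled[OF assms, of mu k]
    by (simp add: field_simps)
qed

lemma scaled_moment_Suc_le:
  assumes "0 \<le> mu" "mu \<le> 1" "0 < m"
  shows "scaled_moment mu (Suc k) (Suc m) \<le> scaled_moment mu (Suc k) m
     + fact (Suc k) * (2 * mu + real (Suc k) * mu^2) / pochhammer (real m + 1) (Suc k)
     + 2 * real (Suc k)^2 * (real (Suc k) + 1) * mu * (scaled_moment mu k m / (real m + 1))"
proof -
  define P where "P = pochhammer (real m + 1) (Suc k)"
  define c where "c = 2 * real (Suc k)^2 * (real (Suc k) + 1) * mu"
  have P: "0 < P" unfolding P_def by (intro pochhammer_pos) simp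
  have c: "0 \<le> c" using assms by (simp add: c_def)
  have "scaled_moment mu (Suc k) (Suc m) = rising_moment mu (Suc k) (Suc m) / P"
    by (simp add: scaled_moment_def P_def add.commute)
  also have "\<dots> \<le> ((real m + real (Suc k)) / real m * rising_moment mu (Suc k) m
      + fact (Suc k) * (2 * mu + real (Suc k) * mu^2) + c * rising_moment mu k m) / P"
    using rising_moment_Suc_le[OF assms, of k] P unfolding c_def by (intro divide_right_mono) auto
  also have "\<dots> = scaled_moment mu (Suc k) m + fact (Suc k) * (2 * mu + real (Suc k) * mu^2) / P
      + c * (rising_moment mu k m / P)"
    using rising_moment_scaled_step[OF assms(3), of "Suc k" mu] by (simp add: add_divide_distrib P_def)
  also have "\<dots> \<le> scaled_moment mu (Suc k) m + fact (Suc k) * (2 * mu + real (Suc k) * mu^2) / P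
      + c * (scaled_moment mu k m / (real m + 1))"
    using rising_moment_div_pochhammer_Suc[OF assms(3), of mu k] c unfolding P_def
    by (intro add_left_mono mult_left_mono) auto
  finally show ?thesis by (simp add: P_def c_def)
qed

lemma scaled_moment_Suc_ge:
  assumes "0 \<le> mu" "mu \<le> 1" "0 < m"
  shows "scaled_moment mu (Suc k) (Suc m) \<ge> scaled_moment mu (Suc k) m
     + 2 * mu * fact (Suc k) / pochhammer (real m + 1) (Suc k)
     - 2 * mu * (fact (Suc k) * rising_moment mu 1 m / pochhammer (real m + 1) (Suc k))
     - mu * real (Suc k) * (scaled_moment mu (Suc k) m / (real m + 1))"
proof -
  define P where "P = pochhammer (real m + 1) (Suc k)"
  have P: "0 < P" unfolding P_def by (intro pochhammer_pos) simp
  have "rising_moment mu (Suc k) m / real m / P = scaled_moment mu (Suc k) m / (real m + real (Suc k))"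
    using rising_moment_scaled_step[OF assms(3), of "Suc k" mu] assms(3) unfolding P_def
    by (simp add: field_simps)
  also have "\<dots> \<le> scaled_moment mu (Suc k) m / (real m + 1)"
    by (intro divide_left_mono scaled_moment_nonneg) auto
  finally have loss: "mu * real (Suc k) * (rising_moment mu (Suc k) m / real m / P)
      \<le> mu * real (Suc k) * (scaled_moment mu (Suc k) m / (real m + 1))"
    using assms by (intro mult_left_mono) auto
  have "scaled_moment mu (Suc k) (Suc m) = rising_moment mu (Suc k) (Suc m) / P"
    by (simp add: scaled_moment_def P_def add.commute)
  also have "\<dots> \<ge> ((real m + real (Suc k)) / real m * rising_moment mu (Suc k) m
     + 2 * mu * fact (Suc k) * (1 - rising_moment mu 1 m)
     - mu * real (Suc k) / real m * rising_moment mu (Suc k) m) / P"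
    using rising_moment_Suc_ge[OF assms, of k] P by (intro divide_right_mono) auto
  also have "((real m + real (Suc k)) / real m * rising_moment mu (Suc k) m
     + 2 * mu * fact (Suc k) * (1 - rising_moment mu 1 m)
     - mu * real (Suc k) / real m * rising_moment mu (Suc k) m) / P
     = scaled_moment mu (Suc k) m + 2 * mu * fact (Suc k) / P
       - 2 * mu * (fact (Suc k) * rising_moment mu 1 m / P)
       - mu * real (Suc k) * (rising_moment mu (Suc k) m / real m / P)"
    using rising_moment_scaled_step[OF assms(3), of "Suc k" mu] unfolding P_def
    by (simp add: diff_divide_distrib add_divide_distrib algebra_simps)
  finally show ?thesis using loss unfolding P_def by linarith
qed

section \<open>Asymptotics of the moments\<close>

lemma harm_ge_1: "1 \<le> m \<Longrightarrow> 1 \<le> (harm m :: real)"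
  using harm_mono[of 1 m] by (simp add: harm_def)

lemma harm_le_1_plus_ln: "1 \<le> n \<Longrightarrow> harm n \<le> 1 + ln (real n)"
  using euler_mascheroni_sequence_decreasing[of 1 n] by (simp add: harm_def)

lemma sum_harm_power_div_le: "(\<Sum>m = 1..<n. harm m ^ k / (real m + 1)) \<le> (harm n ^ Suc k :: real)"
proof (cases "1 \<le> n")
  case True
  have "harm m ^ k / (real m + 1) \<le> harm (Suc m) ^ Suc k - harm m ^ Suc k" for m
  proof -
    have "harm m ^ k \<le> (harm (Suc m) ^ k :: real)"
      by (intro power_mono harm_mono harm_nonneg) auto
    then have "harm m ^ k * harm (Suc m) \<le> harm (Suc m) ^ k * (harm (Suc m) :: real)"
      by (intro mult_right_mono harm_nonneg)
    then show ?thesis by (simp add: harm_Suc algebra_simps inverse_eq_divide)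
  qed
  then have "(\<Sum>m = 1..<n. harm m ^ k / (real m + 1)) \<le> (\<Sum>m = 1..<n. harm (Suc m) ^ Suc k - harm m ^ Suc k)"
    by (intro sum_mono)
  also have "\<dots> = harm n ^ Suc k - harm 1 ^ Suc k" using True by (rule sum_Suc_diff')
  finally show ?thesis by (simp add: harm_def)
qed (simp add: harm_nonneg)

lemma le_error_scale:
  assumes "0 \<le> mu" "1 \<le> n" "a \<le> D"
  shows "mu * (mu + 1 / real n) * harm n ^ a \<le> mu * (mu + 1 / real n) * harm n ^ D"
    and "mu^2 * harm n ^ a \<le> mu * (mu + 1 / real n) * harm n ^ D"
    and "mu * harm n ^ a / real n \<le> mu * (mu + 1 / real n) * harm n ^ D"
proof -
  show *: "mu * (mu + 1 / real n) * harm n ^ a \<le> mu * (mu + 1 / real n) * harm n ^ D"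
    using assms harm_ge_1[OF assms(2)] by (intro mult_left_mono power_increasing) auto
  have "mu^2 \<le> mu * (mu + 1 / real n)" "mu / real n \<le> mu * (mu + 1 / real n)"
    using assms by (simp_all add: power2_eq_square algebra_simps)
  then have "mu^2 * harm n ^ a \<le> mu * (mu + 1 / real n) * harm n ^ a"
    and "mu / real n * harm n ^ a \<le> mu * (mu + 1 / real n) * harm n ^ a"
    by (intro mult_right_mono; simp add: harm_nonneg)+
  then show "mu^2 * harm n ^ a \<le> mu * (mu + 1 / real n) * harm n ^ D"
    and "mu * harm n ^ a / real n \<le> mu * (mu + 1 / real n) * harm n ^ D"
    using * by simp_all
qed

lemma scaled_moment_le_harm_power_step:
  assumes prev: "\<And>m. 1 \<le> m \<Longrightarrow> scaled_moment mu k m \<le> B * harm m ^ k"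
    and "0 \<le> B" "0 \<le> mu" "mu \<le> 1" "1 \<le> n"
  shows "scaled_moment mu (Suc k) n \<le>
    (real (Suc k) * (2 + real (Suc k)) + 2 * real (Suc k)^2 * (real (Suc k) + 1) * B) * mu * harm n ^ Suc k"
proof -
  define r where "r = real (Suc k)"
  define c where "c = 2 * r^2 * (r + 1)"
  define K where "K = r * (2 + r) + c * B"
  have increment: "scaled_moment mu (Suc k) (Suc m) - scaled_moment mu (Suc k) m
      \<le> K * mu * (harm m ^ k / (real m + 1))" if m: "1 \<le> m" for m
  proof -
    have h: "1 \<le> (harm m ^ k :: real)" by (rule one_le_power[OF harm_ge_1[OF m]])
    have "fact (Suc k) * (2 * mu + r * mu^2) / pochhammer (real m + 1) (Suc k)
        = fact (Suc k) / pochhammer (real m + 1) (Suc k) * (2 * mu + r * mu^2)"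
      by simp
    also have "\<dots> \<le> r / (real m + 1) * (2 * mu + r * mu^2)"
      using assms unfolding r_def by (intro mult_right_mono fact_div_pochhammer_le) auto
    also have "\<dots> \<le> r / (real m + 1) * ((2 + r) * mu * harm m ^ k)"
    proof (intro mult_left_mono)
      have "mu^2 \<le> mu" using assms by (simp add: power2_eq_square mult_left_le)
      then have "2 * mu + r * mu^2 \<le> 2 * mu + r * mu" by (intro add_left_mono mult_left_mono) (auto simp: r_def)
      also have "\<dots> = (2 + r) * mu" by (simp add: algebra_simps)
      also have "\<dots> \<le> (2 + r) * mu * harm m ^ k"
        using mult_left_mono[OF h, of "(2 + r) * mu"] assms by (simp add: r_def)
      finally show "2 * mu + r * mu^2 \<le> (2 + r) * mu * harm m ^ k" .
    qed (simp add: r_def)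
    finally have gain: "fact (Suc k) * (2 * mu + r * mu^2) / pochhammer (real m + 1) (Suc k)
        \<le> r * (2 + r) * mu * (harm m ^ k / (real m + 1))" by simp
    have "c * mu * (scaled_moment mu k m / (real m + 1)) \<le> c * mu * (B * harm m ^ k / (real m + 1))"
      using prev[OF m] assms by (intro mult_left_mono divide_right_mono) (auto simp: c_def r_def)
    then show ?thesis
      using scaled_moment_Suc_le[OF assms(3,4), of m k] gain m
      by (simp add: K_def algebra_simps add_divide_distrib c_def r_def)
  qed
  have "scaled_moment mu (Suc k) n - scaled_moment mu (Suc k) 1
      = (\<Sum>m = 1..<n. scaled_moment mu (Suc k) (Suc m) - scaled_moment mu (Suc k) m)"
    using assms by (simp add: sum_Suc_diff')
  also have "\<dots> \<le> (\<Sum>m = 1..<n. K * mu * (harm m ^ k / (real m + 1)))"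
    using increment by (intro sum_mono) auto
  also have "\<dots> \<le> K * mu * harm n ^ Suc k"
    unfolding sum_distrib_left[symmetric] using assms
    by (intro mult_left_mono sum_harm_power_div_le) (auto simp: K_def c_def r_def)
  finally show ?thesis by (simp add: K_def c_def r_def)
qed

text \<open>The logarithms are genuine: \<open>E[B\<^sub>m]/m\<close> grows like \<open>2\<mu> log m\<close>.\<close>
lemma scaled_moment_le_harm_power:
  "\<exists>K \<ge> 0. \<forall>mu m. 0 \<le> mu \<longrightarrow> mu \<le> 1 \<longrightarrow> 1 \<le> m \<longrightarrow>
     scaled_moment mu (Suc k) m \<le> K * mu * harm m ^ Suc k"
proof (induction k)
  case 0
  show ?case
    using scaled_moment_le_harm_power_step[of _ 0 1] by (intro exI[of _ 7]) auto
next
  case (Suc k)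
  then obtain K where "K \<ge> 0" and K: "\<forall>mu m. 0 \<le> mu \<longrightarrow> mu \<le> 1 \<longrightarrow> 1 \<le> m \<longrightarrow>
     scaled_moment mu (Suc k) m \<le> K * mu * harm m ^ Suc k" by blast
  have "scaled_moment mu (Suc k) m \<le> K * harm m ^ Suc k" if "0 \<le> mu" "mu \<le> 1" "1 \<le> m" for mu m
  proof -
    have "K * mu * harm m ^ Suc k \<le> K * 1 * harm m ^ Suc k"
      using that \<open>K \<ge> 0\<close> by (intro mult_right_mono mult_left_mono) (auto simp: harm_nonneg)
    then show ?thesis using K that by fastforce
  qed
  then show ?case
    using scaled_moment_le_harm_power_step[of _ "Suc k" K] \<open>K \<ge> 0\<close>
    by (intro exI[of _ "real (Suc (Suc k)) * (2 + real (Suc (Suc k)))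
        + 2 * real (Suc (Suc k))^2 * (real (Suc (Suc k)) + 1) * K"]) auto
qed

lemma scaled_moment_harm_power_bounds:
  obtains K where "\<And>k. 0 \<le> K k"
    and "\<And>k mu m. 0 \<le> mu \<Longrightarrow> mu \<le> 1 \<Longrightarrow> 1 \<le> m \<Longrightarrow>
      scaled_moment mu (Suc k) m \<le> K k * mu * harm m ^ Suc k"
proof -
  define K where "K k = (SOME K. K \<ge> 0 \<and> (\<forall>mu m. 0 \<le> mu \<longrightarrow> mu \<le> 1 \<longrightarrow> 1 \<le> m \<longrightarrow>
     scaled_moment mu (Suc k) m \<le> K * mu * harm m ^ Suc k))" for k
  have "K k \<ge> 0 \<and> (\<forall>mu m. 0 \<le> mu \<longrightarrow> mu \<le> 1 \<longrightarrow> 1 \<le> m \<longrightarrow>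
     scaled_moment mu (Suc k) m \<le> K k * mu * harm m ^ Suc k)" for k
    unfolding K_def by (rule someI_ex[OF scaled_moment_le_harm_power])
  then show ?thesis by (intro that[of K]) auto
qed

lemma scaled_moment_le_asymp:
  assumes "0 \<le> mu" "mu \<le> 1" "1 \<le> n" "0 \<le> K"
    and crude: "\<And>m. 1 \<le> m \<Longrightarrow> scaled_moment mu (Suc j) m \<le> K * mu * harm m ^ Suc j"
  shows "scaled_moment mu (Suc (Suc j)) n \<le> (2 * mu + real (Suc (Suc j)) * mu^2) / real (Suc j)
    + 2 * real (Suc (Suc j))^2 * (real (Suc (Suc j)) + 1) * K * mu^2 * harm n ^ Suc (Suc j)"
proof -
  define r where "r = real (Suc (Suc j))"
  define c where "c = 2 * r^2 * (r + 1)"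
  define recip where "recip = (\<lambda>m. 1 / pochhammer (real m + 1) (Suc (Suc j)))"
  have c: "0 \<le> c" by (simp add: c_def r_def)
  have increment: "scaled_moment mu (Suc (Suc j)) (Suc m) - scaled_moment mu (Suc (Suc j)) m
      \<le> fact (Suc (Suc j)) * (2 * mu + r * mu^2) * recip m + c * K * mu^2 * (harm m ^ Suc j / (real m + 1))"
    if m: "1 \<le> m" for m
  proof -
    have step: "scaled_moment mu (Suc (Suc j)) (Suc m) \<le> scaled_moment mu (Suc (Suc j)) m
        + fact (Suc (Suc j)) * (2 * mu + r * mu^2) / pochhammer (real m + 1) (Suc (Suc j))
        + c * mu * (scaled_moment mu (Suc j) m / (real m + 1))"
      using scaled_moment_Suc_le[OF assms(1,2), of m "Suc j"] m by (simp add: c_def r_def)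
    have "c * mu * (scaled_moment mu (Suc j) m / (real m + 1))
        \<le> c * mu * (K * mu * harm m ^ Suc j / (real m + 1))"
      using crude[OF m] assms c by (intro mult_left_mono divide_right_mono) auto
    also have "\<dots> = c * K * mu^2 * (harm m ^ Suc j / (real m + 1))"
      by (simp add: power2_eq_square)
    finally show ?thesis using step by (simp add: recip_def)
  qed
  have "scaled_moment mu (Suc (Suc j)) n - scaled_moment mu (Suc (Suc j)) 1
      = (\<Sum>m = 1..<n. scaled_moment mu (Suc (Suc j)) (Suc m) - scaled_moment mu (Suc (Suc j)) m)"
    using assms by (simp add: sum_Suc_diff')
  also have "\<dots> \<le> (\<Sum>m = 1..<n. fact (Suc (Suc j)) * (2 * mu + r * mu^2) * recip m
      + c * K * mu^2 * (harm m ^ Suc j / (real m + 1)))"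
    using increment by (intro sum_mono) auto
  also have "\<dots> = (2 * mu + r * mu^2) * (fact (Suc (Suc j)) * sum recip {1..<n})
      + c * K * mu^2 * (\<Sum>m = 1..<n. harm m ^ Suc j / (real m + 1))"
    by (simp add: sum.distrib sum_distrib_left algebra_simps)
  also have "\<dots> \<le> (2 * mu + r * mu^2) * (1 / real (Suc j)) + c * K * mu^2 * harm n ^ Suc (Suc j)"
    using assms c unfolding recip_def
    by (intro add_mono mult_left_mono fact_mult_sum_recip_pochhammer_le sum_harm_power_div_le)
       (auto simp: r_def)
  finally show ?thesis by (simp add: c_def r_def)
qed

lemma scaled_moment_increment_ge:
  assumes "0 \<le> mu" "mu \<le> 1" "1 \<le> m" "0 \<le> K1" "0 \<le> K"
    and crude1: "scaled_moment mu 1 m \<le> K1 * mu * harm m"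
    and crude: "scaled_moment mu (Suc (Suc j)) m \<le> K * mu * harm m ^ Suc (Suc j)"
  shows "2 * mu * fact (Suc (Suc j)) / pochhammer (real m + 1) (Suc (Suc j))
      - (2 * real (Suc (Suc j))^2 * K1 + real (Suc (Suc j)) * K) * mu^2 * (harm m ^ Suc (Suc j) / (real m + 1))
    \<le> scaled_moment mu (Suc (Suc j)) (Suc m) - scaled_moment mu (Suc (Suc j)) m"
proof -
  define r where "r = real (Suc (Suc j))"
  define F :: real where "F = fact (Suc (Suc j))"
  define P where "P = pochhammer (real m + 1) (Suc (Suc j))"
  have h: "harm m \<le> (harm m ^ Suc (Suc j) :: real)"
    using power_increasing[of 1 "Suc (Suc j)" "harm m :: real"] harm_ge_1[OF assms(3)] by simp
  have "F * rising_moment mu 1 m / P = (F * real m / P) * scaled_moment mu 1 m"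
    using rising_moment_eq_scaled[of m mu 1] assms(3) by simp
  also have "\<dots> \<le> (r^2 / (real m + 1)) * (K1 * mu * harm m ^ Suc (Suc j))"
  proof (intro mult_mono)
    show "F * real m / P \<le> r^2 / (real m + 1)"
      unfolding F_def P_def r_def by (rule fact_mult_div_pochhammer_le)
    show "scaled_moment mu 1 m \<le> K1 * mu * harm m ^ Suc (Suc j)"
      using crude1 mult_left_mono[OF h, of "K1 * mu"] assms by simp
  qed (auto simp: scaled_moment_nonneg)
  finally have "2 * mu * (F * rising_moment mu 1 m / P)
      \<le> 2 * mu * ((r^2 / (real m + 1)) * (K1 * mu * harm m ^ Suc (Suc j)))"
    using assms(1) by (intro mult_left_mono) auto
  also have "\<dots> = 2 * r^2 * K1 * mu^2 * (harm m ^ Suc (Suc j) / (real m + 1))"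
    by (simp add: power2_eq_square)
  finally have mutants_lost: "2 * mu * (F * rising_moment mu 1 m / P)
      \<le> 2 * r^2 * K1 * mu^2 * (harm m ^ Suc (Suc j) / (real m + 1))" .
  have "mu * r * (scaled_moment mu (Suc (Suc j)) m / (real m + 1))
      \<le> mu * r * (K * mu * harm m ^ Suc (Suc j) / (real m + 1))"
    using crude assms by (intro mult_left_mono divide_right_mono) (auto simp: r_def)
  then have back_mutations: "mu * r * (scaled_moment mu (Suc (Suc j)) m / (real m + 1))
      \<le> r * K * mu^2 * (harm m ^ Suc (Suc j) / (real m + 1))"
    by (simp add: power2_eq_square mult_ac)
  have "scaled_moment mu (Suc (Suc j)) m + 2 * mu * F / P - 2 * mu * (F * rising_moment mu 1 m / P)
      - mu * r * (scaled_moment mu (Suc (Suc j)) m / (real m + 1))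
      \<le> scaled_moment mu (Suc (Suc j)) (Suc m)"
    using scaled_moment_Suc_ge[OF assms(1,2), of m "Suc j"] assms(3) by (simp add: F_def P_def r_def)
  then show ?thesis using mutants_lost back_mutations by (simp add: F_def P_def r_def algebra_simps)
qed

lemma scaled_moment_ge_asymp:
  assumes "0 \<le> mu" "mu \<le> 1" "1 \<le> n" "0 \<le> K1" "0 \<le> K"
    and crude1: "\<And>m. 1 \<le> m \<Longrightarrow> scaled_moment mu 1 m \<le> K1 * mu * harm m"
    and crude: "\<And>m. 1 \<le> m \<Longrightarrow> scaled_moment mu (Suc (Suc j)) m \<le> K * mu * harm m ^ Suc (Suc j)"
  shows "2 * mu / real (Suc j) - 2 * mu * fact (Suc (Suc j)) / (real n + 1)
     - (2 * real (Suc (Suc j))^2 * K1 + real (Suc (Suc j)) * K) * mu^2 * harm n ^ Suc (Suc (Suc j))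
     \<le> scaled_moment mu (Suc (Suc j)) n"
proof -
  define F :: real where "F = fact (Suc (Suc j))"
  define c where "c = 2 * real (Suc (Suc j))^2 * K1 + real (Suc (Suc j)) * K"
  define recip where "recip = (\<lambda>m. 1 / pochhammer (real m + 1) (Suc (Suc j)))"
  have "(\<Sum>m = 1..<n. 2 * mu * F * recip m - c * mu^2 * (harm m ^ Suc (Suc j) / (real m + 1)))
      \<le> (\<Sum>m = 1..<n. scaled_moment mu (Suc (Suc j)) (Suc m) - scaled_moment mu (Suc (Suc j)) m)"
    using scaled_moment_increment_ge[OF assms(1,2) _ assms(4,5) crude1 crude]
    by (intro sum_mono) (simp add: F_def c_def recip_def)
  also have "\<dots> = scaled_moment mu (Suc (Suc j)) n"
    using assms by (simp add: sum_Suc_diff')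
  finally have "2 * mu * (F * sum recip {1..<n}) - c * mu^2 * (\<Sum>m = 1..<n. harm m ^ Suc (Suc j) / (real m + 1))
      \<le> scaled_moment mu (Suc (Suc j)) n"
    by (simp add: sum_subtractf sum_distrib_left mult.assoc)
  moreover have "2 * mu * (1 / real (Suc j) - F / (real n + 1)) \<le> 2 * mu * (F * sum recip {1..<n})"
    using fact_mult_sum_recip_pochhammer_ge[OF assms(3), of j] assms
    unfolding F_def recip_def by (intro mult_left_mono) auto
  moreover have "c * mu^2 * (\<Sum>m = 1..<n. harm m ^ Suc (Suc j) / (real m + 1))
      \<le> c * mu^2 * harm n ^ Suc (Suc (Suc j))"
    using assms by (intro mult_left_mono sum_harm_power_div_le) (auto simp: c_def)
  ultimately show ?thesis by (simp add: c_def F_def algebra_simps)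
qed

lemma scaled_moment_asymp:
  "\<exists>K. \<forall>mu n. 0 \<le> mu \<longrightarrow> mu \<le> 1 \<longrightarrow> 1 \<le> n \<longrightarrow>
     \<bar>scaled_moment mu (Suc (Suc j)) n - 2 * mu / real (Suc j)\<bar>
       \<le> K * (mu * (mu + 1 / real n) * harm n ^ Suc (Suc (Suc j)))"
proof -
  define r where "r = real (Suc (Suc j))"
  obtain K where K0: "\<And>k. 0 \<le> K k" and K: "\<And>k mu m. 0 \<le> mu \<Longrightarrow> mu \<le> 1 \<Longrightarrow> 1 \<le> m \<Longrightarrow>
      scaled_moment mu (Suc k) m \<le> K k * mu * harm m ^ Suc k"
    by (rule scaled_moment_harm_power_bounds, rule that)
  define Kup where "Kup = r + 2 * r^2 * (r + 1) * K j"
  define Klo where "Klo = 2 * fact (Suc (Suc j)) + (2 * r^2 * K 0 + r * K (Suc j))"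
  have "\<bar>scaled_moment mu (Suc (Suc j)) n - 2 * mu / real (Suc j)\<bar>
       \<le> (Kup + Klo) * (mu * (mu + 1 / real n) * harm n ^ Suc (Suc (Suc j)))"
    if mu: "0 \<le> mu" "mu \<le> 1" and n: "1 \<le> n" for mu n
  proof -
    define X where "X = mu * (mu + 1 / real n) * harm n ^ Suc (Suc (Suc j))"
    note X = le_error_scale[OF mu(1) n, where D = "Suc (Suc (Suc j))", folded X_def]
    have X_div: "mu / (real n + 1) \<le> X"
      using order_trans[OF _ X(3)[of 0]] mu n by (simp add: frac_le)
    have "scaled_moment mu (Suc (Suc j)) n \<le> (2 * mu + r * mu^2) / real (Suc j)
        + 2 * r^2 * (r + 1) * K j * mu^2 * harm n ^ Suc (Suc j)"
      using scaled_moment_le_asymp[OF mu n K0 K[OF mu]] by (simp add: r_def)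
    moreover have "r * mu^2 / real (Suc j) \<le> r * X"
    proof -
      have "mu^2 / real (Suc j) \<le> mu^2 / 1" by (intro divide_left_mono) auto
      also have "\<dots> \<le> X" using X(2)[of 0] by simp
      finally show ?thesis by (simp add: r_def mult_left_mono flip: times_divide_eq_right)
    qed
    moreover have "2 * r^2 * (r + 1) * K j * mu^2 * harm n ^ Suc (Suc j) \<le> 2 * r^2 * (r + 1) * K j * X"
      using X(2)[of "Suc (Suc j)"] K0[of j] by (simp add: r_def mult_left_mono mult.assoc)
    ultimately have up: "scaled_moment mu (Suc (Suc j)) n - 2 * mu / real (Suc j) \<le> Kup * X"
      by (simp add: Kup_def add_divide_distrib algebra_simps)
    have "2 * mu / real (Suc j) - 2 * mu * fact (Suc (Suc j)) / (real n + 1)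
        - (2 * r^2 * K 0 + r * K (Suc j)) * mu^2 * harm n ^ Suc (Suc (Suc j)) \<le> scaled_moment mu (Suc (Suc j)) n"
      using scaled_moment_ge_asymp[OF mu n K0 K0] K[OF mu, of _ 0] K[OF mu, of _ "Suc j"]
      by (simp add: r_def)
    moreover have "2 * mu * fact (Suc (Suc j)) / (real n + 1) \<le> 2 * fact (Suc (Suc j)) * X"
      using mult_left_mono[OF X_div, of "2 * fact (Suc (Suc j))"] by (simp add: mult_ac del: fact_Suc)
    moreover have "(2 * r^2 * K 0 + r * K (Suc j)) * mu^2 * harm n ^ Suc (Suc (Suc j))
        \<le> (2 * r^2 * K 0 + r * K (Suc j)) * X"
      using X(2)[of "Suc (Suc (Suc j))"] K0[of 0] K0[of "Suc j"]
      by (simp add: r_def mult_left_mono mult.assoc)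
    ultimately have lo: "2 * mu / real (Suc j) - scaled_moment mu (Suc (Suc j)) n \<le> Klo * X"
      by (simp add: Klo_def algebra_simps)
    have "0 \<le> X" using mu by (simp add: X_def harm_nonneg)
    moreover have "0 \<le> Kup" "0 \<le> Klo" using K0[of 0] K0[of j] K0[of "Suc j"]
      by (simp_all add: Kup_def Klo_def r_def)
    ultimately have "0 \<le> Kup * X" "0 \<le> Klo * X" by simp_all
    then have "\<bar>scaled_moment mu (Suc (Suc j)) n - 2 * mu / real (Suc j)\<bar> \<le> (Kup + Klo) * X"
      using up lo unfolding abs_le_iff distrib_right by linarith
    then show ?thesis by (simp add: X_def)
  qed
  then show ?thesis by blast
qed

lemma power_moment_le_scaled_moment:
  assumes "1 \<le> n"
  shows "measure_pmf.expectation (mutant_count mu n) (\<lambda>b. (real b / real n) ^ Suc k)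
    \<le> scaled_moment mu (Suc k) n * (1 + real (Suc k)^2 * real k ^ k / real n)"
proof -
  define N where "N = real n ^ Suc k"
  define Y where "Y = 1 + real (Suc k)^2 * real k ^ k / real n"
  have N: "0 < N" using assms by (simp add: N_def)
  have "measure_pmf.expectation (mutant_count mu n) (\<lambda>b. real b ^ Suc k) \<le> rising_moment mu (Suc k) n"
    unfolding rising_moment_def using pochhammer_minus_power[of "real _" "Suc k"]
    by (intro expectation_mutant_count_mono) (simp add: diff_ge_0_iff_ge del: power_Suc)
  also have "\<dots> = scaled_moment mu (Suc k) n * pochhammer (real n) (Suc k)"
    using assms by (simp add: rising_moment_eq_scaled)
  also have "\<dots> \<le> scaled_moment mu (Suc k) n * (N * Y)"
    using pochhammer_le_power_mult[of "real n" k] assms unfolding N_def Y_def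
    by (intro mult_left_mono scaled_moment_nonneg) auto
  also have "\<dots> = scaled_moment mu (Suc k) n * Y * N" by (simp add: mult_ac)
  finally have "measure_pmf.expectation (mutant_count mu n) (\<lambda>b. real b ^ Suc k) / N
      \<le> scaled_moment mu (Suc k) n * Y"
    using N by (simp add: divide_le_eq)
  then show ?thesis by (simp add: N_def Y_def power_divide)
qed

lemma power_moment_ge_scaled_moment:
  assumes "1 \<le> n"
  shows "scaled_moment mu (Suc k) n - real (Suc k)^2 * real k ^ k * scaled_moment mu k n / real n
    \<le> measure_pmf.expectation (mutant_count mu n) (\<lambda>b. (real b / real n) ^ Suc k)"
proof -
  define N where "N = real n ^ Suc k"
  define c where "c = real (Suc k)^2"
  define Z where "Z = scaled_moment mu (Suc k) n - c * real k ^ k * scaled_moment mu k n / real n"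
  have N: "0 < N" using assms by (simp add: N_def)
  have "scaled_moment mu (Suc k) n * N \<le> scaled_moment mu (Suc k) n * pochhammer (real n) (Suc k)"
    using pochhammer_minus_power[of "real n" "Suc k"] unfolding N_def
    by (intro mult_left_mono scaled_moment_nonneg) auto
  moreover have "c * (scaled_moment mu k n * pochhammer (real n) k)
      \<le> c * (scaled_moment mu k n * (N * (real k ^ k / real n)))"
    using pochhammer_le_power_div[of "real n" k] assms unfolding N_def c_def
    by (intro mult_left_mono scaled_moment_nonneg) auto
  moreover have "rising_moment mu (Suc k) n - c * rising_moment mu k n
      = measure_pmf.expectation (mutant_count mu n) (\<lambda>b. pochhammer (real b) (Suc k) - c * pochhammer (real b) k)"
    by (simp add: rising_moment_def)
  moreover have "\<dots> \<le> measure_pmf.expectation (mutant_count mu n) (\<lambda>b. real b ^ Suc k)"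
  proof (intro expectation_mutant_count_mono)
    fix b
    have "pochhammer (real b) (Suc k) - real b ^ Suc k \<le> c * pochhammer (real b) k"
      using pochhammer_minus_power[of "real b" "Suc k"] by (simp add: c_def)
    then show "pochhammer (real b) (Suc k) - c * pochhammer (real b) k \<le> real b ^ Suc k"
      by linarith
  qed
  moreover have "Z * N = scaled_moment mu (Suc k) n * N - c * (scaled_moment mu k n * (N * (real k ^ k / real n)))"
    by (simp add: Z_def algebra_simps)
  ultimately have "Z * N \<le> measure_pmf.expectation (mutant_count mu n) (\<lambda>b. real b ^ Suc k)"
    using assms by (simp add: rising_moment_eq_scaled)
  then have "Z \<le> measure_pmf.expectation (mutant_count mu n) (\<lambda>b. real b ^ Suc k) / N"
    using N by (simp add: le_divide_eq)
  then show ?thesis by (simp add: Z_def N_def c_def power_divide)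
qed

lemma power_moment_asymp:
  "\<exists>K. \<forall>mu n. 0 \<le> mu \<longrightarrow> mu \<le> 1 \<longrightarrow> 1 \<le> n \<longrightarrow>
     \<bar>measure_pmf.expectation (mutant_count mu n) (\<lambda>b. (real b / real n) ^ Suc (Suc j)) - 2 * mu / real (Suc j)\<bar>
       \<le> K * (mu * (mu + 1 / real n) * harm n ^ Suc (Suc (Suc j)))"
proof -
  obtain K where K: "\<And>mu n. 0 \<le> mu \<Longrightarrow> mu \<le> 1 \<Longrightarrow> 1 \<le> n \<Longrightarrow>
      \<bar>scaled_moment mu (Suc (Suc j)) n - 2 * mu / real (Suc j)\<bar>
       \<le> K * (mu * (mu + 1 / real n) * harm n ^ Suc (Suc (Suc j)))"
    using scaled_moment_asymp[of j] by blast
  obtain K' where K'0: "\<And>k. 0 \<le> K' k" and K': "\<And>k mu m. 0 \<le> mu \<Longrightarrow> mu \<le> 1 \<Longrightarrow> 1 \<le> m \<Longrightarrow>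
      scaled_moment mu (Suc k) m \<le> K' k * mu * harm m ^ Suc k"
    by (rule scaled_moment_harm_power_bounds, rule that)
  define c where "c = real (Suc (Suc j))^2 * real (Suc j) ^ Suc j"
  have "\<bar>measure_pmf.expectation (mutant_count mu n) (\<lambda>b. (real b / real n) ^ Suc (Suc j)) - 2 * mu / real (Suc j)\<bar>
       \<le> (K + c * (K' (Suc j) + K' j)) * (mu * (mu + 1 / real n) * harm n ^ Suc (Suc (Suc j)))"
    if mu: "0 \<le> mu" "mu \<le> 1" and n: "1 \<le> n" for mu n
  proof -
    define M where "M = measure_pmf.expectation (mutant_count mu n) (\<lambda>b. (real b / real n) ^ Suc (Suc j))"
    define X where "X = mu * (mu + 1 / real n) * harm n ^ Suc (Suc (Suc j))"
    note X = le_error_scale[OF mu(1) n, where D = "Suc (Suc (Suc j))", folded X_def]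
    have c: "0 \<le> c" by (simp add: c_def)
    have "scaled_moment mu (Suc (Suc j)) n / real n \<le> K' (Suc j) * (mu * harm n ^ Suc (Suc j) / real n)"
      using K'[OF mu n, of "Suc j"] by (simp add: divide_right_mono)
    also have "\<dots> \<le> K' (Suc j) * X" using X(3)[of "Suc (Suc j)"] K'0 by (intro mult_left_mono) auto
    finally have "c * (scaled_moment mu (Suc (Suc j)) n / real n) \<le> c * (K' (Suc j) * X)"
      using c by (intro mult_left_mono)
    moreover have "M \<le> scaled_moment mu (Suc (Suc j)) n * (1 + c / real n)"
      using power_moment_le_scaled_moment[OF n, of mu "Suc j"] unfolding M_def c_def .
    ultimately have up: "M \<le> scaled_moment mu (Suc (Suc j)) n + c * K' (Suc j) * X"
      by (simp add: algebra_simps)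
    have "scaled_moment mu (Suc j) n / real n \<le> K' j * (mu * harm n ^ Suc j / real n)"
      using K'[OF mu n, of j] by (simp add: divide_right_mono)
    also have "\<dots> \<le> K' j * X" using X(3)[of "Suc j"] K'0 by (intro mult_left_mono) auto
    finally have "c * (scaled_moment mu (Suc j) n / real n) \<le> c * (K' j * X)"
      using c by (intro mult_left_mono)
    moreover have "scaled_moment mu (Suc (Suc j)) n - c * scaled_moment mu (Suc j) n / real n \<le> M"
      using power_moment_ge_scaled_moment[OF n, of mu "Suc j"] unfolding M_def c_def .
    ultimately have lo: "scaled_moment mu (Suc (Suc j)) n - c * K' j * X \<le> M"
      by (simp add: algebra_simps)
    have "\<bar>scaled_moment mu (Suc (Suc j)) n - 2 * mu / real (Suc j)\<bar> \<le> K * X"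
      using K[OF mu n] by (simp add: X_def)
    moreover have "0 \<le> c * K' j * X" "0 \<le> c * K' (Suc j) * X"
      using c K'0[of j] K'0[of "Suc j"] mu by (simp_all add: X_def harm_nonneg)
    ultimately have "\<bar>M - 2 * mu / real (Suc j)\<bar> \<le> (K + c * (K' (Suc j) + K' j)) * X"
      using up lo unfolding abs_le_iff by (simp add: algebra_simps)
    then show ?thesis by (simp add: M_def X_def)
  qed
  then show ?thesis by blast
qed

lemma expectation_square_poly:
  "measure_pmf.expectation (mutant_count mu n)
      (\<lambda>b. (real b / real n)^2 * (\<Sum>i\<le>d. q i * (real b / real n) ^ i))
    = (\<Sum>i\<le>d. q i * measure_pmf.expectation (mutant_count mu n) (\<lambda>b. (real b / real n) ^ Suc (Suc i)))"
proof -
  have "(\<lambda>b. (real b / real n)^2 * (\<Sum>i\<le>d. q i * (real b / real n) ^ i))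
      = (\<lambda>b. \<Sum>i\<le>d. q i * (real b / real n) ^ Suc (Suc i))"
    by (simp add: fun_eq_iff sum_distrib_left algebra_simps power2_eq_square)
  then have "measure_pmf.expectation (mutant_count mu n)
      (\<lambda>b. (real b / real n)^2 * (\<Sum>i\<le>d. q i * (real b / real n) ^ i))
    = (\<Sum>i\<le>d. measure_pmf.expectation (mutant_count mu n) (\<lambda>b. q i * (real b / real n) ^ Suc (Suc i)))"
    by (simp only:) (rule Bochner_Integration.integral_sum, simp)
  then show ?thesis by (simp only: integral_mult_right_zero)
qed

lemma poly_moment_asymp:
  "\<exists>K. \<forall>mu n. 0 \<le> mu \<longrightarrow> mu \<le> 1 \<longrightarrow> 1 \<le> n \<longrightarrow>
     \<bar>measure_pmf.expectation (mutant_count mu n)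
        (\<lambda>b. (real b / real n)^2 * (\<Sum>i\<le>d. q i * (real b / real n) ^ i))
      - mu * (2 * (\<Sum>i\<le>d. q i / real (Suc i)))\<bar>
     \<le> K * (mu * (mu + 1 / real n) * harm n ^ (d + 3))"
proof -
  have "\<forall>j. \<exists>K. \<forall>mu n. 0 \<le> mu \<longrightarrow> mu \<le> 1 \<longrightarrow> 1 \<le> n \<longrightarrow>
     \<bar>measure_pmf.expectation (mutant_count mu n) (\<lambda>b. (real b / real n) ^ Suc (Suc j)) - 2 * mu / real (Suc j)\<bar>
       \<le> K * (mu * (mu + 1 / real n) * harm n ^ Suc (Suc (Suc j)))"
    using power_moment_asymp by blast
  then obtain K where K: "\<And>j mu n. 0 \<le> mu \<Longrightarrow> mu \<le> 1 \<Longrightarrow> 1 \<le> n \<Longrightarrow>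
     \<bar>measure_pmf.expectation (mutant_count mu n) (\<lambda>b. (real b / real n) ^ Suc (Suc j)) - 2 * mu / real (Suc j)\<bar>
       \<le> K j * (mu * (mu + 1 / real n) * harm n ^ Suc (Suc (Suc j)))"
    by metis
  have "\<bar>measure_pmf.expectation (mutant_count mu n)
        (\<lambda>b. (real b / real n)^2 * (\<Sum>i\<le>d. q i * (real b / real n) ^ i))
      - mu * (2 * (\<Sum>i\<le>d. q i / real (Suc i)))\<bar>
     \<le> (\<Sum>i\<le>d. \<bar>q i\<bar> * \<bar>K i\<bar>) * (mu * (mu + 1 / real n) * harm n ^ (d + 3))"
    if mu: "0 \<le> mu" "mu \<le> 1" and n: "1 \<le> n" for mu n
  proof -
    define X where "X = (\<lambda>j. mu * (mu + 1 / real n) * harm n ^ j)"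
    have X: "0 \<le> X j" "X i \<le> X j" if "i \<le> j" for i j
      using mu harm_ge_1[OF n] that by (auto simp: X_def intro!: mult_left_mono power_increasing)
    have "measure_pmf.expectation (mutant_count mu n)
        (\<lambda>b. (real b / real n)^2 * (\<Sum>i\<le>d. q i * (real b / real n) ^ i))
      - mu * (2 * (\<Sum>i\<le>d. q i / real (Suc i)))
      = (\<Sum>i\<le>d. q i * (measure_pmf.expectation (mutant_count mu n) (\<lambda>b. (real b / real n) ^ Suc (Suc i))
          - 2 * mu / real (Suc i)))"
      unfolding expectation_square_poly by (simp add: sum_distrib_left sum_subtractf algebra_simps del: power_Suc)
    also have "\<bar>\<dots>\<bar> \<le> (\<Sum>i\<le>d. \<bar>q i\<bar> * (\<bar>K i\<bar> * X (d + 3)))"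
    proof (rule order_trans[OF sum_abs sum_mono])
      fix i assume i: "i \<in> {..d}"
      have "\<bar>measure_pmf.expectation (mutant_count mu n) (\<lambda>b. (real b / real n) ^ Suc (Suc i)) - 2 * mu / real (Suc i)\<bar>
          \<le> \<bar>K i\<bar> * X (d + 3)"
      proof -
        have "K i * X (Suc (Suc (Suc i))) \<le> \<bar>K i\<bar> * X (Suc (Suc (Suc i)))"
          using X(1)[OF order.refl] by (intro mult_right_mono) auto
        also have "\<dots> \<le> \<bar>K i\<bar> * X (d + 3)"
          using X(2)[of "Suc (Suc (Suc i))" "d + 3"] i by (intro mult_left_mono) auto
        finally show ?thesis using K[OF mu n, of i] unfolding X_def by linarith
      qed
      then show "\<bar>q i * (measure_pmf.expectation (mutant_count mu n) (\<lambda>b. (real b / real n) ^ Suc (Suc i))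
          - 2 * mu / real (Suc i))\<bar> \<le> \<bar>q i\<bar> * (\<bar>K i\<bar> * X (d + 3))"
        by (simp add: abs_mult mult_left_mono)
    qed
    finally show ?thesis by (simp add: X_def sum_distrib_right mult.assoc)
  qed
  then show ?thesis by blast
qed

lemma error_scale_tendsto_zero:
  assumes n: "filterlim n at_top sequentially" and mu: "\<And>k. 0 \<le> mu k"
    and bounded: "\<And>k. real (n k) * mu k \<le> B"
  shows "(\<lambda>k. (mu k + 1 / real (n k)) * harm (n k) ^ D) \<longlonglongrightarrow> 0"
proof (rule tendsto_sandwich[OF _ _ tendsto_const])
  have "((\<lambda>x::real. (max B 0 + 1) * ((1 + ln x) ^ D / x)) \<longlongrightarrow> 0) at_top" by real_asymp
  then show "(\<lambda>k. (max B 0 + 1) * ((1 + ln (real (n k))) ^ D / real (n k))) \<longlonglongrightarrow> 0"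
    using filterlim_compose filterlim_compose[OF filterlim_real_sequentially n] by blast
  have ev: "eventually (\<lambda>k. 1 \<le> n k) sequentially" using n by (simp add: filterlim_at_top)
  show "eventually (\<lambda>k. 0 \<le> (mu k + 1 / real (n k)) * harm (n k) ^ D) sequentially"
    using ev by eventually_elim (use mu in \<open>simp add: harm_nonneg\<close>)
  show "eventually (\<lambda>k. (mu k + 1 / real (n k)) * harm (n k) ^ D
      \<le> (max B 0 + 1) * ((1 + ln (real (n k))) ^ D / real (n k))) sequentially"
    using ev
  proof eventually_elim
    case (elim k)
    then have n0: "0 < real (n k)" by simp
    have "mu k \<le> max B 0 / real (n k)" using bounded[of k] n0 by (simp add: field_simps)
    then have "mu k + 1 / real (n k) \<le> (max B 0 + 1) / real (n k)" by (simp add: add_divide_distrib)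
    moreover have "harm (n k) ^ D \<le> (1 + ln (real (n k))) ^ D"
      using harm_le_1_plus_ln[OF elim] by (intro power_mono harm_nonneg) auto
    ultimately have "(mu k + 1 / real (n k)) * harm (n k) ^ D \<le> ((max B 0 + 1) / real (n k)) * (1 + ln (real (n k))) ^ D"
      using mu[of k] n0 by (intro mult_mono) (auto simp: harm_nonneg)
    then show ?case by simp
  qed
qed

section \<open>Sandwiching the indicator between polynomials\<close>

lemma poly_has_integral:
  "((\<lambda>x::real. \<Sum>i\<le>d. q i * x ^ i) has_integral (\<Sum>i\<le>d. q i / real (Suc i))) {0..1}"
proof -
  have "((\<lambda>x::real. \<Sum>i\<le>d. q i * x ^ i) has_integral
        ((\<lambda>x. \<Sum>i\<le>d. q i * x ^ Suc i / real (Suc i)) 1 - (\<lambda>x. \<Sum>i\<le>d. q i * x ^ Suc i / real (Suc i)) 0)) {0..1}"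
  proof (rule fundamental_theorem_of_calculus)
    fix x :: real
    have "((\<lambda>x. \<Sum>i\<le>d. q i * x ^ Suc i / real (Suc i)) has_real_derivative (\<Sum>i\<le>d. q i * x ^ i)) (at x)"
      by (auto intro!: derivative_eq_intros sum.cong simp del: power_Suc)
    then show "((\<lambda>x. \<Sum>i\<le>d. q i * x ^ Suc i / real (Suc i)) has_vector_derivative (\<Sum>i\<le>d. q i * x ^ i))
        (at x within {0..1})"
      by (simp add: has_real_derivative_iff_has_vector_derivative[symmetric] has_field_derivative_at_within)
  qed simp
  then show ?thesis by simp
qed

lemma inverse_square_has_integral:
  assumes "0 < c" "c \<le> d"
  shows "((\<lambda>x::real. 1 / x^2) has_integral (1 / c - 1 / d)) {c..d}"
proof -
  have "((\<lambda>x::real. 1 / x^2) has_integral ((\<lambda>x. - 1 / x) d - (\<lambda>x. - 1 / x) c)) {c..d}"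
  proof (rule fundamental_theorem_of_calculus)
    fix x :: real assume "x \<in> {c..d}"
    then have "x \<noteq> 0" using assms by auto
    then show "((\<lambda>x. - 1 / x) has_vector_derivative 1 / x^2) (at x within {c..d})"
      unfolding has_real_derivative_iff_has_vector_derivative[symmetric]
      by (auto intro!: derivative_eq_intros simp: power2_eq_square field_simps)
  qed (use assms in simp)
  then show ?thesis by simp
qed

lemma poly_approx_from_above:
  assumes "continuous_on {0..1} f" "0 < e"
  shows "\<exists>d q. (\<forall>x\<in>{0..1}. f x \<le> (\<Sum>i\<le>d. q i * x ^ i) \<and> (\<Sum>i\<le>d. q i * x ^ i) \<le> f x + e)
     \<and> integral {0..1} f \<le> (\<Sum>i\<le>d. q i / real (Suc i))
     \<and> (\<Sum>i\<le>d. q i / real (Suc i)) \<le> integral {0..1} f + e"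
proof -
  obtain g where "polynomial_function g" and g: "\<forall>x\<in>{0..1::real}. norm (f x - g x) < e / 2"
    using Stone_Weierstrass_polynomial_function[OF compact_Icc assms(1), of "e / 2"] assms(2) by auto
  then obtain c d where g_eq: "g = (\<lambda>x. \<Sum>i\<le>d. c i * x ^ i)"
    by (auto simp: real_polynomial_function_iff_sum simp flip: real_polynomial_function_eq)
  define q where "q = (\<lambda>i. c i + (if i = 0 then e / 2 else 0))"
  have p: "(\<Sum>i\<le>d. q i * x ^ i) = g x + e / 2" for x :: real
    by (simp add: q_def g_eq distrib_right sum.distrib if_distrib[of "\<lambda>y. y * _"] cong: if_cong)
  have bounds: "f x \<le> (\<Sum>i\<le>d. q i * x ^ i) \<and> (\<Sum>i\<le>d. q i * x ^ i) \<le> f x + e" if "x \<in> {0..1}" for x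
  proof -
    have "\<bar>f x - g x\<bar> < e / 2" using g that by auto
    then have "- (e / 2) < f x - g x" "f x - g x < e / 2" by (auto simp only: abs_less_iff)
    then show ?thesis unfolding p by simp
  qed
  have lower: "integral {0..1} f \<le> (\<Sum>i\<le>d. q i / real (Suc i))"
    by (rule has_integral_le[OF integrable_integral poly_has_integral])
       (use bounds assms(1) integrable_continuous_real in auto)
  have "(\<Sum>i\<le>d. q i / real (Suc i)) \<le> integral {0..1} (\<lambda>x. f x + e)"
  proof (rule has_integral_le[OF poly_has_integral integrable_integral])
    show "(\<lambda>x. f x + e) integrable_on {0..1}"
      using assms(1) by (intro integrable_add integrable_continuous_real) auto
  qed (use bounds in auto)
  also have "\<dots> = integral {0..1} f + e"
    using assms(1) by (simp add: integral_add integrable_continuous_real)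
  finally show ?thesis using bounds lower by blast
qed

lemma integral_le_inverse_square_tail:
  fixes \<phi> :: "real \<Rightarrow> real"
  assumes cont: "continuous_on {0..1} \<phi>" and "0 < b" "b \<le> 1"
    and zero: "\<And>x. x \<le> b \<Longrightarrow> \<phi> x = 0" and le: "\<And>x. x \<in> {b..1} \<Longrightarrow> \<phi> x \<le> 1 / x^2"
  shows "integral {0..1} \<phi> \<le> 1 / b - 1"
proof -
  have "integral {0..1} \<phi> = integral {0..b} \<phi> + integral {b..1} \<phi>"
    using assms integrable_continuous_real[OF cont]
    by (intro Henstock_Kurzweil_Integration.integral_combine[symmetric]) auto
  also have "integral {0..b} \<phi> = integral {0..b} (\<lambda>_. 0 :: real)"
    using zero by (intro integral_cong) auto
  also have "integral {b..1} \<phi> \<le> integral {b..1} (\<lambda>x. 1 / x^2)"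
  proof (rule integral_le)
    show "\<phi> integrable_on {b..1}"
      using assms by (intro integrable_continuous_real continuous_on_subset[OF cont]) auto
    show "(\<lambda>x. 1 / x^2) integrable_on {b..1}"
      using inverse_square_has_integral[of b 1] assms unfolding integrable_on_def by auto
  qed (use le in auto)
  also have "integral {b..1} (\<lambda>x::real. 1 / x^2) = 1 / b - 1"
    using inverse_square_has_integral[of b 1] assms by (simp add: integral_unique)
  finally show ?thesis by simp
qed

lemma integral_ge_inverse_square_middle:
  fixes \<phi> :: "real \<Rightarrow> real"
  assumes cont: "continuous_on {0..1} \<phi>" and nonneg: "\<And>x. 0 \<le> \<phi> x"
    and "0 < c" "c \<le> d" "d \<le> 1" and eq: "\<And>x. x \<in> {c..d} \<Longrightarrow> \<phi> x = 1 / x^2"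
  shows "1 / c - 1 / d \<le> integral {0..1} \<phi>"
proof -
  have "1 / c - 1 / d = integral {c..d} (\<lambda>x::real. 1 / x^2)"
    using inverse_square_has_integral[of c d] assms by (simp add: integral_unique)
  also have "\<dots> = integral {c..d} \<phi>" using eq by (intro integral_cong) auto
  also have "\<dots> \<le> integral {0..1} \<phi>"
    using assms by (intro integral_subset_le integrable_continuous_real continuous_on_subset[OF cont]) auto
  finally show ?thesis .
qed

lemma continuous_above_indicator_over_square:
  fixes a e :: real
  assumes "0 < a" "a < 1" "0 < e"
  shows "\<exists>\<phi>. continuous_on {0..1} \<phi> \<and> (\<forall>x\<in>{0..1}. 0 \<le> \<phi> x \<and> indicator {a<..<1} x \<le> x^2 * \<phi> x)
     \<and> integral {0..1} \<phi> \<le> 1 / a - 1 + e"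
proof -
  define \<delta> where "\<delta> = min (a / 2) (a^2 * e / 2)"
  define b where "b = a - \<delta>"
  define \<phi> where "\<phi> = (\<lambda>x. max 0 (min 1 ((x - b) / \<delta>)) / (max x b)^2)"
  have \<delta>: "0 < \<delta>" "\<delta> \<le> a / 2" "\<delta> \<le> a^2 * e / 2" using assms by (auto simp: \<delta>_def)
  have b: "a / 2 \<le> b" "0 < b" "b < a" using \<delta> assms by (auto simp: b_def)
  have cont: "continuous_on {0..1} \<phi>"
    unfolding \<phi>_def using \<delta> b by (intro continuous_intros) (auto simp: max_def)
  have pointwise: "0 \<le> \<phi> x \<and> indicator {a<..<1} x \<le> x^2 * \<phi> x" for x
  proof -
    have "x^2 * \<phi> x = 1" if "x \<in> {a<..<1}"
    proof -
      have "1 \<le> (x - b) / \<delta>" using that \<delta> by (simp add: b_def field_simps)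
      moreover have "max x b = x" using that b by simp
      ultimately show ?thesis using that assms by (simp add: \<phi>_def)
    qed
    moreover have "0 \<le> \<phi> x" by (simp add: \<phi>_def)
    ultimately show ?thesis by (cases "x \<in> {a<..<1}") auto
  qed
  have "integral {0..1} \<phi> \<le> 1 / b - 1"
    using b assms \<delta> by (intro integral_le_inverse_square_tail cont)
      (auto simp: \<phi>_def divide_nonpos_pos divide_right_mono)
  moreover have "1 / b - 1 / a = \<delta> / (a * b)" using b assms by (simp add: b_def field_simps)
  moreover have "\<dots> \<le> \<delta> / (a * (a / 2))" using b assms \<delta> by (intro divide_left_mono mult_left_mono) auto
  moreover have "\<dots> \<le> e" using \<delta> assms by (simp add: field_simps power2_eq_square)
  ultimately show ?thesis using cont pointwise by (intro exI[of _ \<phi>]) auto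
qed

lemma continuous_below_indicator_over_square:
  fixes a e :: real
  assumes "0 < a" "a < 1" "0 < e"
  shows "\<exists>\<phi>. continuous_on {0..1} \<phi> \<and> (\<forall>x\<in>{0..1}. x^2 * \<phi> x \<le> indicator {a<..<1} x)
     \<and> 1 / a - 1 - e \<le> integral {0..1} \<phi>"
proof -
  define \<delta> where "\<delta> = min ((1 - a) / 4) (min (a^2 * e / 2) (e / 4))"
  define \<phi> where "\<phi> = (\<lambda>x. min (max 0 (min 1 ((x - a) / \<delta>))) (max 0 (min 1 ((1 - x) / \<delta>))) / (max x a)^2)"
  have "\<delta> \<le> (1 - a) / 4" unfolding \<delta>_def by (rule min.cobounded1)
  then have \<delta>: "0 < \<delta>" "\<delta> \<le> (1 - a) / 4" "\<delta> \<le> a^2 * e / 2" "\<delta> \<le> e / 4"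
    using assms by (simp_all add: \<delta>_def min_le_iff_disj)
  have cont: "continuous_on {0..1} \<phi>"
    unfolding \<phi>_def using assms \<delta> by (intro continuous_intros) (auto simp: max_def)
  have nonneg: "0 \<le> \<phi> x" for x by (simp add: \<phi>_def)
  have pointwise: "x^2 * \<phi> x \<le> indicator {a<..<1} x" for x
  proof (cases "x \<in> {a<..<1}")
    case True
    then have "max x a = x" by simp
    then have "\<phi> x \<le> 1 / x^2" unfolding \<phi>_def by (simp add: divide_right_mono min_le_iff_disj)
    then show ?thesis using True assms by (simp add: field_simps)
  next
    case False
    then have "x \<le> a \<or> 1 \<le> x" by auto
    then have "\<phi> x = 0" using \<delta> by (auto simp: \<phi>_def divide_nonpos_pos)
    then show ?thesis by simp
  qed
  have "1 / (a + \<delta>) - 1 / (1 - \<delta>) \<le> integral {0..1} \<phi>"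
  proof (rule integral_ge_inverse_square_middle[OF cont nonneg])
    fix x assume "x \<in> {a + \<delta>..1 - \<delta>}"
    then have "1 \<le> (x - a) / \<delta>" "1 \<le> (1 - x) / \<delta>" "max x a = x" using \<delta> by (auto simp: field_simps)
    then show "\<phi> x = 1 / x^2" by (simp add: \<phi>_def)
  qed (use assms \<delta> in auto)
  moreover have "1 / a - 1 / (a + \<delta>) \<le> e / 2"
  proof -
    have "1 / a - 1 / (a + \<delta>) = \<delta> / (a * (a + \<delta>))" using assms \<delta> by (simp add: field_simps)
    also have "\<dots> \<le> \<delta> / (a * a)" using assms \<delta> by (intro divide_left_mono mult_left_mono) auto
    also have "\<dots> \<le> e / 2" using assms \<delta> by (simp add: field_simps power2_eq_square)
    finally show ?thesis .
  qed
  moreover have "1 / (1 - \<delta>) - 1 \<le> e / 2"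
  proof -
    have "1 / (1 - \<delta>) - 1 = \<delta> / (1 - \<delta>)" using assms \<delta> by (simp add: field_simps)
    also have "\<dots> \<le> \<delta> / (1 / 2)" using assms \<delta> by (intro divide_left_mono) auto
    also have "\<dots> \<le> e / 2" using \<delta> by simp
    finally show ?thesis .
  qed
  ultimately show ?thesis using cont pointwise by (intro exI[of _ \<phi>]) auto
qed

lemma indicator_le_square_poly:
  fixes a e :: real
  assumes "0 < a" "a < 1" "0 < e"
  shows "\<exists>d q. (\<forall>x\<in>{0..1}. indicator {a<..<1} x \<le> x^2 * (\<Sum>i\<le>d. q i * x ^ i))
     \<and> 2 * (\<Sum>i\<le>d. q i / real (Suc i)) \<le> 2 * (1 / a - 1) + e"
proof -
  obtain \<phi> where cont: "continuous_on {0..1} \<phi>"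
    and \<phi>: "\<And>x. x \<in> {0..1} \<Longrightarrow> 0 \<le> \<phi> x \<and> indicator {a<..<1} x \<le> x^2 * \<phi> x"
    and int: "integral {0..1} \<phi> \<le> 1 / a - 1 + e / 4"
    using continuous_above_indicator_over_square[of a "e / 4"] assms by auto
  obtain d q where p: "\<forall>x\<in>{0..1}. \<phi> x \<le> (\<Sum>i\<le>d. q i * x ^ i) \<and> (\<Sum>i\<le>d. q i * x ^ i) \<le> \<phi> x + e / 4"
    and int_p: "(\<Sum>i\<le>d. q i / real (Suc i)) \<le> integral {0..1} \<phi> + e / 4"
    using poly_approx_from_above[OF cont, of "e / 4"] assms(3) by auto
  have "indicator {a<..<1} x \<le> x^2 * (\<Sum>i\<le>d. q i * x ^ i)" if "x \<in> {0..1}" for x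
    using \<phi>[OF that] mult_left_mono[OF p[rule_format, OF that, THEN conjunct1], of "x^2"] by simp
  moreover have "2 * (\<Sum>i\<le>d. q i / real (Suc i)) \<le> 2 * (1 / a - 1) + e" using int int_p by simp
  ultimately show ?thesis by blast
qed

lemma square_poly_le_indicator:
  fixes a e :: real
  assumes "0 < a" "a < 1" "0 < e"
  shows "\<exists>d q. (\<forall>x\<in>{0..1}. x^2 * (\<Sum>i\<le>d. q i * x ^ i) \<le> indicator {a<..<1} x)
     \<and> 2 * (1 / a - 1) - e \<le> 2 * (\<Sum>i\<le>d. q i / real (Suc i))"
proof -
  obtain \<phi> where cont: "continuous_on {0..1} \<phi>"
    and \<phi>: "\<And>x. x \<in> {0..1} \<Longrightarrow> x^2 * \<phi> x \<le> indicator {a<..<1} x"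
    and int: "1 / a - 1 - e / 4 \<le> integral {0..1} \<phi>"
    using continuous_below_indicator_over_square[of a "e / 4"] assms by auto
  have cont': "continuous_on {0..1} (\<lambda>x. \<phi> x - e / 4)" by (intro continuous_intros cont)
  obtain d q where p: "\<forall>x\<in>{0..1}. \<phi> x - e / 4 \<le> (\<Sum>i\<le>d. q i * x ^ i) \<and> (\<Sum>i\<le>d. q i * x ^ i) \<le> \<phi> x"
    and int_p: "integral {0..1} (\<lambda>x. \<phi> x - e / 4) \<le> (\<Sum>i\<le>d. q i / real (Suc i))"
    using poly_approx_from_above[OF cont', of "e / 4"] assms(3) by auto
  have "x^2 * (\<Sum>i\<le>d. q i * x ^ i) \<le> indicator {a<..<1} x" if "x \<in> {0..1}" for x
    using \<phi>[OF that] mult_left_mono[OF p[rule_format, OF that, THEN conjunct2], of "x^2"] by simp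
  moreover have "integral {0..1} (\<lambda>x. \<phi> x - e / 4) = integral {0..1} \<phi> - e / 4"
    using cont by (simp add: integral_diff integrable_continuous_real)
  then have "2 * (1 / a - 1) - e \<le> 2 * (\<Sum>i\<le>d. q i / real (Suc i))" using int int_p by simp
  ultimately show ?thesis by blast
qed

lemma indicator_asymp_of_poly_moments:
  fixes L :: "nat \<Rightarrow> (real \<Rightarrow> real) \<Rightarrow> real" and w :: "nat \<Rightarrow> real" and a e :: real
  assumes a: "0 < a" "a < 1" and e: "0 < e" and w: "\<And>k. 0 \<le> w k"
    and mono: "\<And>k f g. (\<And>x. x \<in> {0..1} \<Longrightarrow> f x \<le> g x) \<Longrightarrow> L k f \<le> L k g"
    and moments: "\<And>d q e. 0 < e \<Longrightarrow> eventually (\<lambda>k.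
       \<bar>L k (\<lambda>x. x^2 * (\<Sum>i\<le>d. q i * x ^ i)) - w k * (2 * (\<Sum>i\<le>d. q i / real (Suc i)))\<bar> \<le> e * w k)
       sequentially"
  shows "eventually (\<lambda>k. \<bar>L k (indicator {a<..<1}) - w k * (2 * (1 / a - 1))\<bar> \<le> e * w k) sequentially"
proof -
  have e2: "0 < e / 2" using e by simp
  obtain dU qU where U: "\<forall>x\<in>{0..1}. indicator {a<..<1} x \<le> x^2 * (\<Sum>i\<le>dU. qU i * x ^ i)"
    and intU: "2 * (\<Sum>i\<le>dU. qU i / real (Suc i)) \<le> 2 * (1 / a - 1) + e / 2"
    using indicator_le_square_poly[OF a e2] by blast
  obtain dL qL where L: "\<forall>x\<in>{0..1}. x^2 * (\<Sum>i\<le>dL. qL i * x ^ i) \<le> indicator {a<..<1} x"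
    and intL: "2 * (1 / a - 1) - e / 2 \<le> 2 * (\<Sum>i\<le>dL. qL i / real (Suc i))"
    using square_poly_le_indicator[OF a e2] by blast
  show ?thesis using moments[OF e2, of qU dU] moments[OF e2, of qL dL]
  proof eventually_elim
    case (elim k)
    have "L k (indicator {a<..<1}) \<le> L k (\<lambda>x. x^2 * (\<Sum>i\<le>dU. qU i * x ^ i))"
      using U by (intro mono) auto
    moreover have "L k (\<lambda>x. x^2 * (\<Sum>i\<le>dL. qL i * x ^ i)) \<le> L k (indicator {a<..<1})"
      using L by (intro mono) auto
    moreover have "w k * (2 * (\<Sum>i\<le>dU. qU i / real (Suc i))) \<le> w k * (2 * (1 / a - 1) + e / 2)"
      and "w k * (2 * (1 / a - 1) - e / 2) \<le> w k * (2 * (\<Sum>i\<le>dL. qL i / real (Suc i)))"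
      using intU intL w[of k] by (auto intro: mult_left_mono)
    moreover note elim[unfolded abs_le_iff]
    ultimately show ?case unfolding abs_le_iff by (simp add: algebra_simps)
  qed
qed

section \<open>Convergence of the expected number of sites\<close>

lemma mutant_count_indicator_asymp:
  assumes a: "0 < a" "a < 1" and e: "0 < e" and mu: "\<And>k. 0 \<le> mu k" "\<And>k. mu k \<le> 1"
    and n: "filterlim n at_top sequentially" and bounded: "\<And>k. real (n k) * mu k \<le> B"
  shows "eventually (\<lambda>k. \<bar>measure_pmf.expectation (mutant_count (mu k) (n k))
      (\<lambda>b. indicator {a<..<1} (real b / real (n k))) - mu k * (2 * (1 / a - 1))\<bar> \<le> e * mu k) sequentially"
proof (rule indicator_asymp_of_poly_moments[OF a e mu(1),
      where L = "\<lambda>k f. measure_pmf.expectation (mutant_count (mu k) (n k)) (\<lambda>b. f (real b / real (n k)))"])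
  fix k and f g :: "real \<Rightarrow> real"
  assume fg: "\<And>x. x \<in> {0..1} \<Longrightarrow> f x \<le> g x"
  have "real b / real (n k) \<in> {0..1}" if "b \<le> n k" for b
    using that by (auto simp: divide_le_eq_1)
  then show "measure_pmf.expectation (mutant_count (mu k) (n k)) (\<lambda>b. f (real b / real (n k)))
      \<le> measure_pmf.expectation (mutant_count (mu k) (n k)) (\<lambda>b. g (real b / real (n k)))"
    by (intro expectation_mutant_count_mono fg)
next
  fix d q and e' :: real
  assume e': "0 < e'"
  obtain K where K: "\<And>mu n. 0 \<le> mu \<Longrightarrow> mu \<le> 1 \<Longrightarrow> 1 \<le> n \<Longrightarrow>
     \<bar>measure_pmf.expectation (mutant_count mu n)
        (\<lambda>b. (real b / real n)^2 * (\<Sum>i\<le>d. q i * (real b / real n) ^ i))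
      - mu * (2 * (\<Sum>i\<le>d. q i / real (Suc i)))\<bar>
     \<le> K * (mu * (mu + 1 / real n) * harm n ^ (d + 3))"
    using poly_moment_asymp[of q d] by blast
  have "(\<lambda>k. \<bar>K\<bar> * ((mu k + 1 / real (n k)) * harm (n k) ^ (d + 3))) \<longlonglongrightarrow> \<bar>K\<bar> * 0"
    by (intro tendsto_mult tendsto_const error_scale_tendsto_zero[OF n mu(1) bounded])
  then have "eventually (\<lambda>k. \<bar>K\<bar> * ((mu k + 1 / real (n k)) * harm (n k) ^ (d + 3)) < e') sequentially"
    using e' by (simp add: order_tendstoD(2))
  moreover have "eventually (\<lambda>k. 1 \<le> n k) sequentially" using n by (simp add: filterlim_at_top)
  ultimately show "eventually (\<lambda>k. \<bar>measure_pmf.expectation (mutant_count (mu k) (n k))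
      (\<lambda>b. (real b / real (n k))^2 * (\<Sum>i\<le>d. q i * (real b / real (n k)) ^ i))
      - mu k * (2 * (\<Sum>i\<le>d. q i / real (Suc i)))\<bar> \<le> e' * mu k) sequentially"
  proof eventually_elim
    case (elim k)
    have "K * (mu k * (mu k + 1 / real (n k)) * harm (n k) ^ (d + 3))
        \<le> mu k * (\<bar>K\<bar> * ((mu k + 1 / real (n k)) * harm (n k) ^ (d + 3)))"
      using mu[of k] by (simp add: mult_ac mult_left_mono mult_right_mono harm_nonneg)
    also have "\<dots> \<le> mu k * e'" using elim mu[of k] by (intro mult_left_mono) auto
    finally show ?case using K[OF mu(1,2) elim(2), of k] by (simp add: mult.commute)
  qed
qed

lemma tendsto_mult_of_relative_error:
  fixes s w P :: "nat \<Rightarrow> real"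
  assumes lim: "(\<lambda>k. s k * w k) \<longlonglongrightarrow> \<eta>" and s: "\<And>k. 0 \<le> s k"
    and rel: "\<And>e. 0 < e \<Longrightarrow> eventually (\<lambda>k. \<bar>P k - w k * c\<bar> \<le> e * w k) sequentially"
  shows "(\<lambda>k. s k * P k) \<longlonglongrightarrow> \<eta> * c"
proof -
  have "(\<lambda>k. s k * (P k - w k * c)) \<longlonglongrightarrow> 0"
  proof (rule tendstoI)
    fix e :: real assume e: "0 < e"
    define e' where "e' = e / (\<bar>\<eta>\<bar> + 2)"
    have e': "0 < e'" "e' * (\<bar>\<eta>\<bar> + 1) < e" using e by (auto simp: e'_def field_simps)
    have "eventually (\<lambda>k. s k * w k < \<bar>\<eta>\<bar> + 1) sequentially"
      using lim by (rule order_tendstoD) simp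
    then show "eventually (\<lambda>k. dist (s k * (P k - w k * c)) 0 < e) sequentially"
      using rel[OF e'(1)]
    proof eventually_elim
      case (elim k)
      have "\<bar>s k * (P k - w k * c)\<bar> \<le> s k * (e' * w k)"
        using elim s[of k] by (simp add: abs_mult mult_left_mono)
      also have "\<dots> = e' * (s k * w k)" by simp
      also have "\<dots> \<le> e' * (\<bar>\<eta>\<bar> + 1)" using elim e' by (intro mult_left_mono) auto
      finally show ?case using e' by simp
    qed
  qed
  then have "(\<lambda>k. s k * w k * c + s k * (P k - w k * c)) \<longlonglongrightarrow> \<eta> * c + 0"
    by (intro tendsto_intros lim)
  then show ?thesis by (simp add: algebra_simps)
qed

theorem mainTheorem4:
  fixes n :: "nat \<Rightarrow> nat" and mu :: "nat \<Rightarrow> real" and S :: "nat \<Rightarrow> 'a set"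
    and u :: "nat \<Rightarrow> 'a \<Rightarrow> nuc" and a \<theta> \<eta> :: real
  assumes "0 < a" "a < 1"
    and "\<And>k. finite (S k)" "\<And>k. S k \<noteq> {}"
    and "\<And>k. 0 \<le> mu k" "\<And>k. mu k \<le> 1"
    and "filterlim n at_top sequentially"
    and "mu \<longlonglongrightarrow> 0"
    and "0 \<le> \<theta>" "(\<lambda>k. real (n k) * mu k) \<longlonglongrightarrow> \<theta>"
    and "0 \<le> \<eta>" "(\<lambda>k. real (card (S k)) * mu k) \<longlonglongrightarrow> \<eta>"
  shows "(\<lambda>k. expected_sites (n k) (mu k) (S k) (u k) a) \<longlonglongrightarrow> 2 * \<eta> * (1 / a - 1)"
proof -
  obtain B where B: "\<And>k. real (n k) * mu k \<le> B"
    using convergent_imp_Bseq[OF convergentI[OF assms(10)]] by (auto simp: Bseq_def abs_le_iff)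
  define P :: "nat \<Rightarrow> real" where "P = (\<lambda>k. measure_pmf.expectation (mutant_count (mu k) (n k))
      (\<lambda>b. indicator {a<..<1} (real b / real (n k))))"
  have "(\<lambda>k. real (card (S k)) * P k) \<longlonglongrightarrow> \<eta> * (2 * (1 / a - 1))"
    using assms(12) unfolding P_def
    by (rule tendsto_mult_of_relative_error)
       (use mutant_count_indicator_asymp[OF assms(1,2) _ assms(5,6,7) B] in auto)
  moreover have "eventually (\<lambda>k. real (card (S k)) * P k = expected_sites (n k) (mu k) (S k) (u k) a)
      sequentially"
    using assms(7) unfolding filterlim_at_top
    by (auto elim!: eventually_mono[OF spec[of _ 1]] simp: P_def expected_sites_eq assms(3,5,6))
  ultimately have "(\<lambda>k. expected_sites (n k) (mu k) (S k) (u k) a) \<longlonglongrightarrow> \<eta> * (2 * (1 / a - 1))"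
    by (rule Lim_transform_eventually)
  then show ?thesis by (simp only: mult.assoc mult.left_commute[of \<eta> 2])
qed

end
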